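(* For every integer $k\ge1$, the number of $1$-factorisations of $GP(3k,k)$ equals $t_k(1)+3h_k(2)$.
   Context: $GP(3k,k)$ has vertex set $\{u_i,v_i : i\in\mathbb{Z}_{3k}\}$ and edges $u_iu_{i+1}$, $u_iv_i$, $v_iv_{i+k}$ for $i\in\mathbb{Z}_{3k}$. A $1$-factorisation is a partition of the edge set into perfect matchings (unordered). Let $T$ be a triangle (cycle of length $3$) and $H$ a cycle of length $6$. For $\ell\ge0$, $t_k(\ell)$ denotes the number of walks of length $k$ from $x$ to $y$ in $T$, where $x,y$ are vertices of $T$ at distance $\ell$, and $h_k(\ell)$ denotes the number of walks of length $k$ from $x$ to $y$ in $H$, where $x,y$ are vertices of $H$ at distance $\ell$ (these numbers depend only on $\ell$). *)

theory Defs
  imports Main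
begin

(* Vertices of GP(3k,k): u_i = (False, i), v_i = (True, i), with i \<in> {0..<3k} representing Z_{3k}. *)

definition gp_vertices :: "nat \<Rightarrow> (bool \<times> nat) set" where
  "gp_vertices k = {(b, i). i < 3 * k}"

definition gp_edges :: "nat \<Rightarrow> (bool \<times> nat) set set" where
  "gp_edges k =
     {{(False, i), (False, (i + 1) mod (3 * k))} | i. i < 3 * k}
   \<union> {{(False, i), (True, i)} | i. i < 3 * k}
   \<union> {{(True, i), (True, (i + k) mod (3 * k))} | i. i < 3 * k}"

definition perfect_matching :: "'a set \<Rightarrow> 'a set set \<Rightarrow> 'a set set \<Rightarrow> bool" where
  "perfect_matching V E M \<longleftrightarrow> M \<subseteq> E \<and> (\<forall>x\<in>V. \<exists>!e. e \<in> M \<and> x \<in> e)"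

definition one_factorisation :: "'a set \<Rightarrow> 'a set set \<Rightarrow> 'a set set set \<Rightarrow> bool" where
  "one_factorisation V E F \<longleftrightarrow>
     (\<forall>M\<in>F. perfect_matching V E M \<and> M \<noteq> {}) \<and>
     \<Union>F = E \<and>
     (\<forall>M\<in>F. \<forall>M'\<in>F. M \<noteq> M' \<longrightarrow> M \<inter> M' = {})"

definition cycle_adj :: "nat \<Rightarrow> nat \<Rightarrow> nat \<Rightarrow> bool" where
  "cycle_adj n a b \<longleftrightarrow> a < n \<and> b < n \<and> (b = (a + 1) mod n \<or> a = (b + 1) mod n)"

definition cycle_walks :: "nat \<Rightarrow> nat \<Rightarrow> nat \<Rightarrow> nat \<Rightarrow> nat" where
  "cycle_walks n m x y = card {w :: nat list. length w = m + 1 \<and> w ! 0 = x \<and> w ! m = y \<and>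
       (\<forall>i<m. cycle_adj n (w ! i) (w ! (i + 1)))}"

definition t_walks :: "nat \<Rightarrow> nat \<Rightarrow> nat" where
  "t_walks k l = cycle_walks 3 k 0 l"

definition h_walks :: "nat \<Rightarrow> nat \<Rightarrow> nat" where
  "h_walks k l = cycle_walks 6 k 0 l"

end

theory Submission
  imports Defs "HOL-Library.FuncSet"
begin

text \<open>
  A 1-factorisation of the cubic graph \<open>GP(3k,k)\<close> is the same as a proper
  3-edge-colouring in which the colours of the three edges at \<open>v\<^sub>0\<close> are fixed.
  The inner edges form the \<open>k\<close> triangles \<open>v\<^sub>j v\<^sub>j\<^sub>+\<^sub>k v\<^sub>j\<^sub>+\<^sub>2\<^sub>k\<close>, so every spoke
  \<open>u\<^sub>i v\<^sub>i\<close> has the colour of the opposite triangle edge, and it also has the colour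
  missing from the two outer edges at \<open>u\<^sub>i\<close>.  Hence a colouring is determined by the
  outer cycle, read as \<open>k + 1\<close> triples of colours of the edges entering
  \<open>u\<^sub>j, u\<^sub>j\<^sub>+\<^sub>k, u\<^sub>j\<^sub>+\<^sub>2\<^sub>k\<close>; consecutive triples must be admissible (the three spokes get
  distinct colours), and the last triple is the rotation of the first.

  After the normalisation, the first triple is either a rainbow \<open>(x, x+1, x+2)\<close>, and
  then all triples are rainbows and their first entries form a walk from 0 to 1 in the
  triangle; or it has two equal entries, and then so do all triples: the position of the
  odd entry performs a walk from 0 to 2 in the triangle while the repeated colour
  alternates between two values, so the sequence closes up only for even \<open>k\<close>, with 3
  choices of the starting position.  Finally \<open>h\<^sub>k(2)\<close> is \<open>t\<^sub>k(2) = t\<^sub>k(1)\<close> for even \<open>k\<close>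
  and 0 for odd \<open>k\<close>, since walks on the hexagon project onto walks on the triangle.
\<close>

section \<open>Walks on cycles\<close>

definition walks :: "nat \<Rightarrow> nat \<Rightarrow> nat \<Rightarrow> nat \<Rightarrow> nat list set" where
  "walks n m x y = {w :: nat list. length w = m + 1 \<and> w ! 0 = x \<and> w ! m = y \<and>
       (\<forall>i<m. cycle_adj n (w ! i) (w ! (i + 1)))}"

lemma cycle_walks_eq_card_walks: "cycle_walks n m x y = card (walks n m x y)"
  unfolding cycle_walks_def walks_def by simp

lemma walks_nth_less:
  assumes "w \<in> walks n m x y" "x < n" "i \<le> m"
  shows "w ! i < n"
  using assms unfolding walks_def cycle_adj_def
  by (cases i) (auto)

lemma finite_walks:
  assumes "x < n"
  shows "finite (walks n m x y)"
proof -
  have "walks n m x y \<subseteq> {w. set w \<subseteq> {..<n} \<and> length w = m + 1}"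
  proof
    fix w assume w: "w \<in> walks n m x y"
    then have "length w = m + 1" unfolding walks_def by auto
    moreover have "set w \<subseteq> {..<n}"
    proof
      fix a assume "a \<in> set w"
      then obtain i where "i < length w" "w ! i = a" by (auto simp: in_set_conv_nth)
      then show "a \<in> {..<n}"
        using walks_nth_less[OF w assms, of i] \<open>length w = m+1\<close> by auto
    qed
    ultimately show "w \<in> {w. set w \<subseteq> {..<n} \<and> length w = m + 1}" by auto
  qed
  moreover have "finite {w. set w \<subseteq> {..<n} \<and> length w = m + 1}"
    by (rule finite_lists_length_eq) auto
  ultimately show ?thesis by (rule finite_subset)
qed

lemma walks_0: "walks n 0 x y = (if x = y then {[x]} else {})"
  unfolding walks_def
  by (auto simp: length_Suc_conv)

lemma less_3_iff: "(n::nat) < 3 \<longleftrightarrow> n = 0 \<or> n = 1 \<or> n = 2"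
  by auto

lemma cycle_adj_3: "cycle_adj 3 a b \<longleftrightarrow> a < 3 \<and> b < 3 \<and> a \<noteq> b"
  unfolding cycle_adj_def less_3_iff by auto

lemma cycle_adj_iff_neighbour:
  assumes "n \<ge> 3" "y < n"
  shows "cycle_adj n a y \<longleftrightarrow> a = (y + 1) mod n \<or> a = (y + n - 1) mod n"
proof -
  have "a < n \<Longrightarrow> y = (a + 1) mod n \<longleftrightarrow> a = (y + n - 1) mod n"
    using assms by (cases "a + 1 = n") (auto simp: mod_if split: if_splits)
  then show ?thesis using assms unfolding cycle_adj_def by (auto)
qed

lemma walks_Suc:
  assumes "n \<ge> 3" "y < n" "x < n"
  shows "walks n (Suc m) x y = (\<lambda>v. v @ [y]) `
    (walks n m x ((y+1) mod n) \<union> walks n m x ((y + n - 1) mod n))"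
proof (rule set_eqI, rule iffI)
  fix w assume w: "w \<in> walks n (Suc m) x y"
  then have len: "length w = m + 2" by (simp add: walks_def)
  let ?v = "butlast w"
  have ne: "w \<noteq> []" using len by auto
  have "last w = y" using w len ne by (simp add: last_conv_nth walks_def)
  then have wv: "w = ?v @ [y]" using append_butlast_last_id[OF ne] by simp
  have vn: "\<And>i. i \<le> m \<Longrightarrow> ?v ! i = w ! i"
    using len by (simp add: nth_butlast)
  have "\<forall>i<Suc m. cycle_adj n (w ! i) (w ! Suc i)" "w ! Suc m = y"
    using w by (simp_all add: walks_def)
  then have "cycle_adj n (w ! m) y" by auto
  then have "w ! m = (y + 1) mod n \<or> w ! m = (y + n - 1) mod n"
    using cycle_adj_iff_neighbour[OF assms(1,2)] by auto
  moreover have "\<forall>i<m. cycle_adj n (?v ! i) (?v ! (i + 1))"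
    using w vn by (simp add: walks_def)
  moreover have "length ?v = m + 1" "?v ! 0 = x" using w len vn[of 0] by (auto simp: walks_def)
  ultimately have "?v \<in> walks n m x ((y+1) mod n) \<union> walks n m x ((y + n - 1) mod n)"
    using vn[of m] by (auto simp: walks_def)
  then show "w \<in> (\<lambda>v. v @ [y]) ` (walks n m x ((y+1) mod n) \<union> walks n m x ((y + n - 1) mod n))"
    using wv by blast
next
  fix w assume "w \<in> (\<lambda>v. v @ [y]) ` (walks n m x ((y+1) mod n) \<union> walks n m x ((y + n - 1) mod n))"
  then obtain v z where v: "v \<in> walks n m x z" "z = (y+1) mod n \<or> z = (y + n - 1) mod n" and wv:
    "w = v @ [y]"
    by blast
  have len: "length v = m + 1" using v by (simp add: walks_def)
  have "cycle_adj n z y" using cycle_adj_iff_neighbour[OF assms(1,2)] v(2) by auto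
  moreover have "\<forall>i<m. cycle_adj n (v ! i) (v ! (i + 1))" "v ! 0 = x" "v ! m = z"
    using v by (auto simp: walks_def)
  ultimately show "w \<in> walks n (Suc m) x y"
    unfolding walks_def wv using len
    by (auto simp: nth_append less_Suc_eq)
qed

lemma card_walks_Suc:
  assumes "n \<ge> 3" "y < n" "x < n"
  shows "card (walks n (Suc m) x y) = card (walks n m x ((y+1) mod n)) + card
    (walks n m x ((y + n - 1) mod n))"
proof -
  have d: "(y+1) mod n \<noteq> (y + n - 1) mod n" using assms
    by (cases "y + 1 = n") (auto simp: mod_if)
  have disj: "walks n m x ((y+1) mod n) \<inter> walks n m x ((y + n - 1) mod n) = {}"
  proof (rule ccontr)
    assume "\<not> ?thesis"
    then obtain w where "w \<in> walks n m x ((y+1) mod n)" "w \<in> walks n m x ((y + n - 1) mod n)"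
      by blast
    then show False using d unfolding walks_def by auto
  qed
  have inj: "inj_on (\<lambda>v. v @ [y]) A" for A by (auto simp: inj_on_def)
  show ?thesis
    unfolding walks_Suc[OF assms] card_image[OF inj]
    by (rule card_Un_disjoint[OF finite_walks finite_walks disj]) (use assms in auto)
qed

lemma triangle_walks_rec:
  "card (walks 3 m 0 1) = card (walks 3 m 0 2)
    \<and> card (walks 3 (Suc m) 0 1) = card (walks 3 m 0 0) + card (walks 3 m 0 2)"
proof (induction m)
  case 0
  then show ?case by (simp add: walks_0 card_walks_Suc)
next
  case (Suc m)
  then show ?case by (simp add: card_walks_Suc)
qed

lemma card_hexagon_walks:
  "y < 6 \<Longrightarrow> card (walks 6 m 0 y) = (if even (m + y) then card (walks 3 m 0 (y mod 3)) else 0)"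
proof (induction m arbitrary: y)
  case 0
  from 0 have "y = 0 \<or> y = 1 \<or> y = 2 \<or> y = 3 \<or> y = 4 \<or> y = 5" by auto
  then show ?case by (auto simp: walks_0)
next
  case (Suc m)
  from Suc.prems have "y = 0 \<or> y = 1 \<or> y = 2 \<or> y = 3 \<or> y = 4 \<or> y = 5" by auto
  then show ?case
    using Suc.IH triangle_walks_rec[of m] by (auto simp: card_walks_Suc numeral_2_eq_2[symmetric])
qed

lemma h_walks_2_eq: "h_walks k 2 = (if even k then t_walks k 1 else 0)"
  unfolding h_walks_def t_walks_def cycle_walks_eq_card_walks
  using card_hexagon_walks[of 2 k] triangle_walks_rec[of k] by simp

lemma card_triangle_walks_0_2: "card (walks 3 k 0 2) = t_walks k 1"
  unfolding t_walks_def cycle_walks_eq_card_walks using triangle_walks_rec[of k] by simp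

section \<open>Triples of colours\<close>

definition third :: "nat \<Rightarrow> nat \<Rightarrow> nat" where "third a b = 3 - a - b"

text \<open>A triple lists the colours of the outer edges entering \<open>u\<^sub>j, u\<^sub>j\<^sub>+\<^sub>k, u\<^sub>j\<^sub>+\<^sub>2\<^sub>k\<close>, the
  next one those leaving them; the spokes at these vertices get the remaining colours
  \<open>third\<close>.\<close>

fun admissible :: "nat \<times> nat \<times> nat \<Rightarrow> nat \<times> nat \<times> nat \<Rightarrow> bool" where
  "admissible (x0,x1,x2) (y0,y1,y2) \<longleftrightarrow>
     x0 < 3 \<and> x1 < 3 \<and> x2 < 3 \<and> y0 < 3 \<and> y1 < 3 \<and> y2 < 3 \<and> x0 \<noteq> y0 \<and> x1 \<noteq> y1 \<and> x2 \<noteq> y2 \<and>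
     third x0 y0 \<noteq> third x1 y1 \<and> third x0 y0 \<noteq> third x2 y2 \<and> third x1 y1 \<noteq> third x2 y2"

fun rotate :: "nat \<times> nat \<times> nat \<Rightarrow> nat \<times> nat \<times> nat" where
  "rotate (x0,x1,x2) = (x1,x2,x0)"

text \<open>The spokes at \<open>u\<^sub>0, u\<^sub>k, u\<^sub>2\<^sub>k\<close> get the colours 0, 1, 2.\<close>

fun normalised :: "nat \<times> nat \<times> nat \<Rightarrow> nat \<times> nat \<times> nat \<Rightarrow> bool" where
  "normalised (x0,x1,x2) (y0,y1,y2) = (third x0 y0 = 0 \<and> third x1 y1 = 1 \<and> third x2 y2 = 2)"

definition rainbow :: "nat \<Rightarrow> nat \<times> nat \<times> nat" where
  "rainbow x = (x, (x+1) mod 3, (x+2) mod 3)"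

definition twin :: "nat \<Rightarrow> nat \<Rightarrow> nat \<Rightarrow> nat \<times> nat \<times> nat" where
  "twin q a s =
     (if q = 0 then (a+s) mod 3 else a, if q = 1 then (a+s) mod 3 else a, if q = 2 then (a+s) mod
       3 else a)"

definition twin_pos :: "nat \<times> nat \<times> nat \<Rightarrow> nat" where
  "twin_pos X = (case X of (x0,x1,x2) \<Rightarrow> if x1 = x2 then 0 else if x0 = x2 then 1 else 2)"

lemma other_mod_3:
  "(x::nat) < 3 \<Longrightarrow> y < 3 \<Longrightarrow> y \<noteq> x \<Longrightarrow> y = (x+1) mod 3 \<or> y = (x+2) mod 3"
  unfolding less_3_iff by auto

lemma admissibleD:
  assumes "admissible (x0,x1,x2) Y"
  shows "\<exists>y0 y1 y2. Y = (y0,y1,y2) \<and> (y0 = (x0+1) mod 3 \<or> y0 = (x0+2) mod 3) \<and>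
     (y1 = (x1+1) mod 3 \<or> y1 = (x1+2) mod 3) \<and> (y2 = (x2+1) mod 3 \<or> y2 = (x2+2) mod 3)"
proof -
  obtain y0 y1 y2 where Y: "Y = (y0,y1,y2)" by (cases Y) auto
  show ?thesis using assms other_mod_3 unfolding Y by auto
qed

lemma admissible_rainbow_iff:
  assumes "x < 3"
  shows "admissible (rainbow x) Y \<longleftrightarrow> (\<exists>y<3. y \<noteq> x \<and> Y = rainbow y)"
proof
  assume a: "admissible (rainbow x) Y"
  then have "admissible (x, (x+1) mod 3, (x+2) mod 3) Y" by (simp add: rainbow_def)
  from admissibleD[OF this] obtain y0 y1 y2 where Y: "Y = (y0,y1,y2)" and
    d: "(y0 = (x+1) mod 3 \<or> y0 = (x+2) mod 3)"
      "(y1 = ((x+1) mod 3+1) mod 3 \<or> y1 = ((x+1) mod 3+2) mod 3)"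
      "(y2 = ((x+2) mod 3+1) mod 3 \<or> y2 = ((x+2) mod 3+2) mod 3)" by blast
  show "\<exists>y<3. y \<noteq> x \<and> Y = rainbow y" using assms a d unfolding Y less_3_iff
    by (elim disjE) (auto simp: rainbow_def third_def)
next
  assume "\<exists>y<3. y \<noteq> x \<and> Y = rainbow y"
  then obtain y where "y<3" "y\<noteq>x" "Y = rainbow y" by auto
  then show "admissible (rainbow x) Y"
    using assms unfolding less_3_iff by (elim disjE) (auto simp: rainbow_def third_def)
qed

lemma admissible_twinD:
  assumes "q < 3" "a < 3" "s = 1 \<or> s = 2" "admissible (twin q a s) Y"
  shows "twin_pos Y < 3 \<and> twin_pos Y \<noteq> q \<and> Y = twin (twin_pos Y) ((a + 3 - s) mod 3) (3 - s)"
proof -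
  obtain x0 x1 x2 where X: "(x0,x1,x2) = twin q a s" by (cases "twin q a s") auto
  from admissibleD[of x0 x1 x2 Y] assms(4) X[symmetric] obtain y0 y1 y2 where Y:
    "Y = (y0,y1,y2)" and
    d: "(y0 = (x0+1) mod 3 \<or> y0 = (x0+2) mod 3)" "(y1 = (x1+1) mod 3 \<or> y1 = (x1+2) mod 3)"
      "(y2 = (x2+1) mod 3 \<or> y2 = (x2+2) mod 3)" by auto
  have t: "admissible (x0,x1,x2) (y0,y1,y2)" using assms(4) X[symmetric] Y by simp
  show ?thesis
    using assms(1-3) t d X unfolding Y less_3_iff
    by (elim disjE; simp add: twin_def twin_pos_def third_def)
qed

lemma admissible_twinI:
  assumes "q < 3" "a < 3" "s = 1 \<or> s = 2" "q' < 3" "q' \<noteq> q"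
  shows "admissible (twin q a s) (twin q' ((a + 3 - s) mod 3) (3 - s))"
  using assms unfolding less_3_iff by (elim disjE) (auto simp: twin_def third_def)

lemma third_cases:
  assumes "a < 3" "b < 3" "a \<noteq> b"
  shows "third a b = 0 \<Longrightarrow> (a = 1 \<and> b = 2) \<or> (a = 2 \<and> b = 1)"
    and "third a b = 1 \<Longrightarrow> (a = 0 \<and> b = 2) \<or> (a = 2 \<and> b = 0)"
    and "third a b = 2 \<Longrightarrow> (a = 0 \<and> b = 1) \<or> (a = 1 \<and> b = 0)"
  using assms unfolding less_3_iff third_def by auto

lemma normalised_admissible_cases:
  assumes "admissible X Y" "normalised X Y"
  shows "(\<exists>x. (x = 1 \<or> x = 2) \<and> X = rainbow x \<and> Y = rainbow ((2*x) mod 3)) \<or>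
         (\<exists>q<3. \<exists>s. (s = 1 \<or> s = 2) \<and> X = twin q q s \<and> Y = twin ((q + 3 - s) mod 3) ((q + 3 - s)
           mod 3) (3 - s))"
proof -
  obtain x0 x1 x2 where X: "X = (x0,x1,x2)" by (cases X) auto
  obtain y0 y1 y2 where Y: "Y = (y0,y1,y2)" by (cases Y) auto
  have t: "x0 < 3" "x1 < 3" "x2 < 3" "y0 < 3" "y1 < 3" "y2 < 3" "x0 \<noteq> y0" "x1 \<noteq> y1" "x2 \<noteq> y2"
    using assms(1) X Y by auto
  have n: "third x0 y0 = 0" "third x1 y1 = 1" "third x2 y2 = 2" using assms(2) X Y by auto
  have "(x0 = 1 \<and> y0 = 2) \<or> (x0 = 2 \<and> y0 = 1)"
    using third_cases(1)[OF t(1,4,7) n(1)] .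
  moreover have "(x1 = 0 \<and> y1 = 2) \<or> (x1 = 2 \<and> y1 = 0)"
    using third_cases(2)[OF t(2,5,8) n(2)] .
  moreover have "(x2 = 0 \<and> y2 = 1) \<or> (x2 = 1 \<and> y2 = 0)"
    using third_cases(3)[OF t(3,6,9) n(3)] .
  ultimately show ?thesis
    unfolding X Y
    by (elim disjE) (simp_all add: rainbow_def twin_def less_3_iff conj_disj_distribR
      ex_disj_distrib)
qed

lemma rotate_rainbow: "x < 3 \<Longrightarrow> rotate (rainbow x) = rainbow ((x+1) mod 3)"
  unfolding less_3_iff by (auto simp: rainbow_def)

lemma rotate_twin: "q < 3 \<Longrightarrow> rotate (twin q a s) = twin ((q+2) mod 3) a s"
  unfolding less_3_iff by (auto simp: twin_def)

lemma twin_inj: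
  assumes "q < 3" "a < 3" "s = 1 \<or> s = 2" "q' < 3" "a' < 3" "s' = 1 \<or> s' = 2"
   "twin q a s = twin q' a' s'" shows "q = q' \<and> a = a' \<and> s = s'"
  using assms unfolding less_3_iff by (elim disjE) (auto simp: twin_def)

lemma rainbow_neq_twin:
  assumes "q < 3" "a < 3" "s = 1 \<or> s = 2"
  shows "rainbow x \<noteq> twin q a s"
proof (cases "x < 3")
  case True
  then show ?thesis
    using assms unfolding less_3_iff by (elim disjE) (auto simp: twin_def rainbow_def)
next
  case False
  then show ?thesis using assms by (auto simp: twin_def rainbow_def)
qed

lemma admissible_rainbowI:
  "a < 3 \<Longrightarrow> b < 3 \<Longrightarrow> a \<noteq> b \<Longrightarrow> admissible (rainbow a) (rainbow b)"
  using admissible_rainbow_iff by blast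

lemma twin_pos_twin:
  assumes "q < 3" "a < 3" "s = 1 \<or> s = 2"
  shows "twin_pos (twin q a s) = q"
  using assms unfolding less_3_iff by (elim disjE) (auto simp: twin_def twin_pos_def)

lemma less_3_remaining:
  "(a::nat) < 3 \<Longrightarrow> b < 3 \<Longrightarrow> c < 3 \<Longrightarrow> d < 3 \<Longrightarrow> a \<noteq> b \<Longrightarrow> a \<noteq> c \<Longrightarrow> b \<noteq> c \<Longrightarrow> d \<noteq> a \<Longrightarrow> d \<noteq> c \<Longrightarrow> d = b"
  unfolding less_3_iff by (elim disjE) simp_all

lemma eq_third:
  "(a::nat) < 3 \<Longrightarrow> b < 3 \<Longrightarrow> d < 3 \<Longrightarrow> a \<noteq> b \<Longrightarrow> d \<noteq> a \<Longrightarrow> d \<noteq> b \<Longrightarrow> d = third a b"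
  unfolding less_3_iff third_def by (elim disjE) simp_all

lemma third_less_neq:
  "(a::nat) < 3 \<Longrightarrow> b < 3 \<Longrightarrow> a \<noteq> b \<Longrightarrow> third a b < 3 \<and> third a b \<noteq> a \<and> third a b \<noteq> b"
  unfolding less_3_iff third_def by (elim disjE) simp_all

lemma inj_on_3I:
  "f A \<noteq> f B \<Longrightarrow> f A \<noteq> f C \<Longrightarrow> f B \<noteq> f C \<Longrightarrow> inj_on f {A,B,C}"
  unfolding inj_on_def by auto

lemma inj_on_3D:
  "inj_on f {A,B,C} \<Longrightarrow> A \<noteq> B \<Longrightarrow> A \<noteq> C \<Longrightarrow> B \<noteq> C \<Longrightarrow> f A \<noteq> f B \<and> f A \<noteq> f C \<and> f B \<noteq> f C"
  unfolding inj_on_def by blast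

definition coord :: "nat \<Rightarrow> nat \<times> nat \<times> nat \<Rightarrow> nat" where
  "coord r X = (if r = 0 then fst X else if r = 1 then fst (snd X) else snd (snd X))"

lemma coord_rotate:
  "coord 0 (rotate X) = coord 1 X" "coord 1 (rotate X) = coord 2 X" "coord 2 (rotate X) = coord 0 X"
  by (cases X; simp add: coord_def)+

lemma coord_Suc_0_rotate: "coord (Suc 0) (rotate X) = coord 2 X"
  by (cases X; simp add: coord_def)+

lemma triple_eqI:
  "coord 0 X = coord 0 Y \<Longrightarrow> coord 1 X = coord 1 Y \<Longrightarrow> coord 2 X = coord 2 Y \<Longrightarrow> X = Y"
  by (cases X; cases Y) (simp add: coord_def)

lemma admissible_iff_coord:
  "admissible X Y \<longleftrightarrow> (coord 0 X < 3 \<and> coord 1 X < 3 \<and> coord 2 X < 3 \<and> coord 0 Y < 3 \<and> coord 1 Y < 3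
    \<and> coord 2 Y < 3 \<and>
   coord 0 X \<noteq> coord 0 Y \<and> coord 1 X \<noteq> coord 1 Y \<and> coord 2 X \<noteq> coord 2 Y \<and>
   third (coord 0 X) (coord 0 Y) \<noteq> third (coord 1 X) (coord 1 Y) \<and> third (coord 0 X) (coord 0 Y) \<noteq>
     third (coord 2 X) (coord 2 Y) \<and>
   third (coord 1 X) (coord 1 Y) \<noteq> third (coord 2 X) (coord 2 Y))"
  by (cases X; cases Y) (simp add: coord_def)

lemma normalised_iff_coord:
  "normalised X Y \<longleftrightarrow> third (coord 0 X) (coord 0 Y) = 0 \<and> third (coord 1 X) (coord 1 Y) = 1
    \<and> third (coord 2 X) (coord 2 Y) = 2"
  by (cases X; cases Y) (simp add: coord_def)

lemma admissible_coord:
  "admissible X Y \<Longrightarrow> r < 3 \<Longrightarrow> coord r X < 3 \<and> coord r Y < 3 \<and> coord r X \<noteq> coord r Y"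
  unfolding admissible_iff_coord less_3_iff by auto

section \<open>Counting sequences of triples\<close>

definition colour_seqs :: "nat \<Rightarrow> (nat \<times> nat \<times> nat) list set" where
  "colour_seqs k = {xs. length xs = Suc k \<and> (\<forall>j<k. admissible (xs!j) (xs!Suc j))
    \<and> xs!k = rotate (xs!0) \<and> normalised (xs!0) (xs!1)}"

definition rainbow_seqs :: "nat \<Rightarrow> (nat \<times> nat \<times> nat) list set" where
  "rainbow_seqs k = {xs \<in> colour_seqs k. \<exists>x. xs!0 = rainbow x}"

definition twin_seqs :: "nat \<Rightarrow> (nat \<times> nat \<times> nat) list set" where
  "twin_seqs k = {xs \<in> colour_seqs k. \<not> (\<exists>x. xs!0 = rainbow x)}"

definition rainbow_seq :: "nat list \<Rightarrow> (nat \<times> nat \<times> nat) list" where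
  "rainbow_seq w = map (\<lambda>a. rainbow ((a + w!1) mod 3)) w"

lemma triangle_walk_nth_less:
  "w \<in> walks 3 k 0 y \<Longrightarrow> j \<le> k \<Longrightarrow> w ! j < 3"
  using walks_nth_less[of w 3 k 0 y j] by simp

lemma triangle_walk_nth_neq:
  "w \<in> walks 3 k 0 y \<Longrightarrow> j < k \<Longrightarrow> w ! j \<noteq> w ! Suc j"
  unfolding walks_def cycle_adj_3 by auto

lemma triangle_walk_nth_1:
  assumes "w \<in> walks 3 k 0 y" "k \<ge> 1"
  shows "w ! 1 = 1 \<or> w ! 1 = 2"
proof -
  have "w!0 = 0" using assms by (simp add: walks_def)
  moreover have "w ! 1 < 3" using triangle_walk_nth_less[OF assms(1), of 1] assms by simp
  moreover have "w!0 \<noteq> w!1" using triangle_walk_nth_neq[OF assms(1), of 0] assms by simp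
  ultimately show ?thesis by auto
qed

lemma rainbow_seq_in_rainbow_seqs:
  assumes "w \<in> walks 3 k 0 1" "k \<ge> 1"
  shows "rainbow_seq w \<in> rainbow_seqs k"
proof -
  have len: "length w = Suc k" and w0: "w!0 = 0" and wk: "w!k = 1"
    using assms by (auto simp: walks_def)
  have c: "w!1 = 1 \<or> w!1 = 2" using triangle_walk_nth_1[OF assms] .
  have lt: "\<And>j. j \<le> k \<Longrightarrow> w!j < 3"
    using triangle_walk_nth_less[OF assms(1)] .
  have "\<forall>j<k. admissible (rainbow_seq w!j) (rainbow_seq w!Suc j)"
  proof (intro allI impI)
    fix j assume j: "j < k"
    have "w!j < 3" "w!Suc j < 3" "w!j \<noteq> w!Suc j"
      using lt[of j] lt[of "Suc j"] j triangle_walk_nth_neq[OF assms(1) j] by auto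
    then have "admissible (rainbow ((w!j + w!1) mod 3)) (rainbow ((w!Suc j + w!1) mod 3))"
      using c by (intro admissible_rainbowI) (auto simp: less_3_iff)
    then show "admissible (rainbow_seq w!j) (rainbow_seq w!Suc j)"
      using j len by (simp add: rainbow_seq_def)
  qed
  moreover have "rainbow_seq w!k = rotate (rainbow_seq w!0)"
    using len w0 wk c by (auto simp: rainbow_seq_def rainbow_def)
  moreover have "normalised (rainbow_seq w!0) (rainbow_seq w!1)" using len w0 c assms(2)
    by (auto simp: rainbow_seq_def rainbow_def third_def)
  ultimately show ?thesis using len by (auto simp: rainbow_seqs_def colour_seqs_def rainbow_seq_def)
qed

lemma inj_on_rainbow_seq:
  assumes "k \<ge> 1"
  shows "inj_on rainbow_seq (walks 3 k 0 1)"
proof (rule inj_onI)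
  fix w w' assume w: "w \<in> walks 3 k 0 1" and w': "w' \<in> walks 3 k 0 1" and eq:
    "rainbow_seq w = rainbow_seq w'"
  have len: "length w = Suc k" "length w' = Suc k" and w0: "w!0 = 0" "w'!0 = 0"
    using w w' by (auto simp: walks_def)
  have "rainbow_seq w ! 0 = rainbow_seq w' ! 0" using eq by simp
  then have "rainbow (w!1 mod 3) = rainbow (w'!1 mod 3)" using len w0 by (simp add: rainbow_seq_def)
  then have c: "w!1 = w'!1"
    using triangle_walk_nth_1[OF w assms] triangle_walk_nth_1[OF w' assms]
      by (auto simp: rainbow_def)
  show "w = w'"
  proof (rule nth_equalityI)
    show "length w = length w'" using len by simp
    fix j assume "j < length w"
    then have j: "j \<le> k" using len by simp
    have "rainbow_seq w ! j = rainbow_seq w' ! j" using eq by simp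
    then have "rainbow ((w!j + w!1) mod 3) = rainbow ((w'!j + w!1) mod 3)"
      using len j c by (simp add: rainbow_seq_def)
    then have "(w!j + w!1) mod 3 = (w'!j + w!1) mod 3" by (simp add: rainbow_def)
    then show "w!j = w'!j"
      using triangle_walk_nth_less[OF w j] triangle_walk_nth_less[OF w' j]
        triangle_walk_nth_1[OF w assms] unfolding less_3_iff
      by (elim disjE) auto
  qed
qed

lemma rainbow_chain:
  assumes adm: "\<forall>j<k. admissible (xs!j) (xs!Suc j)"
    and x: "x < 3" and xs0: "xs!0 = rainbow x" and "j \<le> k"
  shows "fst (xs!j) < 3 \<and> xs!j = rainbow (fst (xs!j))"
  using \<open>j \<le> k\<close>
proof (induction j)
  case 0
  then show ?case using x xs0 by (simp add: rainbow_def)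
next
  case (Suc j)
  then have "fst (xs!j) < 3" "admissible (rainbow (fst (xs!j))) (xs!Suc j)"
    using adm by (auto simp: Suc_le_eq)
  then obtain y where "y < 3" "xs!Suc j = rainbow y" using admissible_rainbow_iff by blast
  then show ?case by (simp add: rainbow_def)
qed

lemma rainbow_seqs_subset_image:
  assumes "xs \<in> rainbow_seqs k" "k \<ge> 1"
  shows "xs \<in> rainbow_seq ` walks 3 k 0 1"
proof -
  from assms obtain x where xs: "xs \<in> colour_seqs k" "xs!0 = rainbow x"
    by (auto simp: rainbow_seqs_def)
  have len: "length xs = Suc k" and adm: "\<forall>j<k. admissible (xs!j) (xs!Suc j)"
    and last: "xs!k = rotate (xs!0)"
    using xs by (auto simp: colour_seqs_def)
  have tr: "admissible (xs!0) (xs!1)" "normalised (xs!0) (xs!1)"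
    using xs assms(2) by (auto simp: colour_seqs_def)
  have "\<not> (\<exists>q<3. \<exists>s. (s = 1 \<or> s = 2) \<and> xs!0 = twin q q s \<and>
      xs!1 = twin ((q + 3 - s) mod 3) ((q + 3 - s) mod 3) (3 - s))"
    using xs(2) rainbow_neq_twin by auto
  with normalised_admissible_cases[OF tr]
  obtain y where y: "y = 1 \<or> y = 2" "xs!0 = rainbow y" "xs!1 = rainbow ((2*y) mod 3)"
    by blast
  define v where "v = map fst xs"
  have xv: "xs!j = rainbow (v!j) \<and> v!j < 3" if "j \<le> k" for j
    using rainbow_chain[OF adm _ y(2) that] y(1) len that by (auto simp: v_def)
  have v01: "v!0 = y" "v!1 = (2 * y) mod 3" using y len assms(2) by (auto simp: v_def rainbow_def)
  have vk: "v!k = (y + 1) mod 3"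
    using last xv[of 0] xv[of k] v01 rotate_rainbow by (auto simp: rainbow_def)
  define w where "w = map (\<lambda>a. (a + 3 - y) mod 3) v"
  have wlen: "length w = Suc k" using len by (simp add: w_def v_def)
  have wj: "\<And>j. j \<le> k \<Longrightarrow> w!j = (v!j + 3 - y) mod 3"
    using len by (simp add: w_def v_def)
  have "w \<in> walks 3 k 0 1"
    unfolding walks_def cycle_adj_3
  proof (intro CollectI conjI allI impI)
    show "length w = k + 1" using wlen by simp
    show "w!0 = 0" using wj[of 0] v01 y(1) by auto
    show "w!k = 1" using wj[of k] vk y(1) by auto
    fix i assume i: "i < k"
    have "v!i < 3" "v!(i+1) < 3" "v!i \<noteq> v!(i+1)"
      using xv[of i] xv[of "i+1"] adm i by (auto simp: rainbow_def)
    then show "w!i < 3" "w!(i+1) < 3" "w!i \<noteq> w!(i+1)"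
      using wj[of i] wj[of "i+1"] i y(1) unfolding less_3_iff by auto
  qed
  moreover have "rainbow_seq w = xs"
  proof (rule nth_equalityI)
    show "length (rainbow_seq w) = length xs" using wlen len by (simp add: rainbow_seq_def)
    fix j assume "j < length (rainbow_seq w)"
    then have j: "j \<le> k" using wlen by (simp add: rainbow_seq_def)
    have "w!1 = y" using wj[of 1] v01 y(1) assms(2) by auto
    then have "(w!j + w!1) mod 3 = v!j" using wj[OF j] xv[OF j] y(1) unfolding less_3_iff by auto
    then show "rainbow_seq w ! j = xs ! j" using j wlen xv[OF j] by (simp add: rainbow_seq_def)
  qed
  ultimately show ?thesis by blast
qed

lemma card_rainbow_seqs:
  assumes "k \<ge> 1"
  shows "card (rainbow_seqs k) = t_walks k 1"
proof -
  have "rainbow_seqs k = rainbow_seq ` walks 3 k 0 1"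
    using rainbow_seqs_subset_image[OF _ assms] rainbow_seq_in_rainbow_seqs[OF _ assms] by blast
  then show ?thesis unfolding t_walks_def cycle_walks_eq_card_walks
    using card_image[OF inj_on_rainbow_seq[OF assms]] by simp
qed

text \<open>The odd entry sits at position \<open>w\<^sub>j + c\<close>, the repeated colour alternates between \<open>c\<close>
  and \<open>c + w\<^sub>1\<close>.\<close>

definition twin_seq_nth :: "nat \<Rightarrow> nat list \<Rightarrow> nat \<Rightarrow> nat \<times> nat \<times> nat" where
  "twin_seq_nth c w j = twin ((w!j + c) mod 3) (if even j then c else (c + w!1) mod 3)
    (if even j then 3 - w!1 else w!1)"

definition twin_seq :: "nat \<times> nat list \<Rightarrow> (nat \<times> nat \<times> nat) list" where
  "twin_seq p = map (twin_seq_nth (fst p) (snd p)) [0..<length (snd p)]"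

lemma normalised_twin:
  "c < 3 \<Longrightarrow> (v = 1 \<or> v = 2) \<Longrightarrow> normalised (twin c c (3 - v)) (twin ((v + c) mod 3) ((c + v) mod 3) v)"
  unfolding less_3_iff by (elim disjE) (auto simp: twin_def third_def)

lemma twin_seq_in_twin_seqs:
  assumes "w \<in> walks 3 k 0 2" "k \<ge> 1" "even k" "c < 3"
  shows "twin_seq (c, w) \<in> twin_seqs k"
proof -
  have len: "length w = Suc k" and w0: "w!0 = 0" and wk: "w!k = 2"
    using assms by (auto simp: walks_def)
  have v: "w!1 = 1 \<or> w!1 = 2" using triangle_walk_nth_1[OF assms(1,2)] .
  have lt: "\<And>j. j \<le> k \<Longrightarrow> w!j < 3"
    using triangle_walk_nth_less[OF assms(1)] .
  have pj: "\<And>j. j \<le> k \<Longrightarrow> twin_seq (c,w) ! j = twin_seq_nth c w j"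
    using len by (simp add: twin_seq_def del: upt_Suc)
  have "\<forall>j<k. admissible (twin_seq (c,w)!j) (twin_seq (c,w)!Suc j)"
  proof (intro allI impI)
    fix j assume j: "j < k"
    have ne: "(w!Suc j + c) mod 3 \<noteq> (w!j + c) mod 3"
      using lt[of j] lt[of "Suc j"] j triangle_walk_nth_neq[OF assms(1) j] assms(4)
        unfolding less_3_iff
        by auto
    show "admissible (twin_seq (c,w)!j) (twin_seq (c,w)!Suc j)"
    proof (cases "even j")
      case True
      have "admissible (twin ((w!j + c) mod 3) c (3 - w!1))
        (twin ((w!Suc j + c) mod 3) ((c + 3 - (3 - w!1)) mod 3) (3 - (3 - w!1)))"
        by (rule admissible_twinI) (use v assms(4) ne in auto)
      moreover have "(c + 3 - (3 - w!1)) mod 3 = (c + w!1) mod 3" "3 - (3 - w!1) = w!1"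
        using v by auto
      ultimately show ?thesis using True j pj[of j] pj[of "Suc j"] by (simp add: twin_seq_nth_def)
    next
      case False
      have "admissible (twin ((w!j + c) mod 3) ((c + w!1) mod 3) (w!1))
        (twin ((w!Suc j + c) mod 3) (((c + w!1) mod 3 + 3 - w!1) mod 3) (3 - w!1))"
        by (rule admissible_twinI) (use v assms(4) ne in auto)
      moreover have "((c + w!1) mod 3 + 3 - w!1) mod 3 = c"
        using v assms(4) unfolding less_3_iff by auto
      ultimately show ?thesis using False j pj[of j] pj[of "Suc j"] by (simp add: twin_seq_nth_def)
    qed
  qed
  moreover have "twin_seq (c,w)!k = rotate (twin_seq (c,w)!0)"
    using pj[of k] pj[of 0] assms(3,4) wk w0 rotate_twin[of c]
      by (simp add: twin_seq_nth_def add.commute)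
  moreover have "normalised (twin_seq (c,w)!0) (twin_seq (c,w)!1)"
    using pj[of 0] pj[of 1] assms(2,4) w0 normalised_twin[OF assms(4) v]
      by (simp add: twin_seq_nth_def)
  moreover have "\<not> (\<exists>x. twin_seq (c,w)!0 = rainbow x)"
  proof
    assume "\<exists>x. twin_seq (c,w)!0 = rainbow x"
    then obtain x where x: "twin_seq (c,w)!0 = rainbow x" by blast
    have "twin_seq (c,w)!0 = twin c c (3 - w!1)"
      using pj[of 0] w0 assms(4) by (simp add: twin_seq_nth_def)
    then have "rainbow x = twin c c (3 - w!1)" using x by simp
    moreover have "3 - w!1 = 1 \<or> 3 - w!1 = 2" using v by auto
    ultimately show False using rainbow_neq_twin[of c c "3 - w!1" x] assms(4) by blast
  qed
  ultimately show ?thesis using len by (auto simp: twin_seqs_def colour_seqs_def twin_seq_def)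
qed

lemma inj_on_twin_seq:
  assumes "k \<ge> 1"
  shows "inj_on twin_seq ({..<3} \<times> walks 3 k 0 2)"
proof (rule inj_onI)
  fix p p' assume p: "p \<in> {..<3} \<times> walks 3 k 0 2" and p': "p' \<in> {..<3} \<times> walks 3 k 0 2" and eq:
    "twin_seq p = twin_seq p'"
  obtain c w where pc: "p = (c, w)" by (cases p)
  obtain c' w' where pc': "p' = (c', w')" by (cases p')
  have w: "w \<in> walks 3 k 0 2" "c < 3" and w': "w' \<in> walks 3 k 0 2" "c' < 3"
    using p p' pc pc' by auto
  have len: "length w = Suc k" "length w' = Suc k" and w0: "w!0 = 0" "w'!0 = 0"
    using w w' by (auto simp: walks_def)
  have v: "w!1 = 1 \<or> w!1 = 2" "w'!1 = 1 \<or> w'!1 = 2"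
    using triangle_walk_nth_1[OF w(1) assms] triangle_walk_nth_1[OF w'(1) assms] by auto
  have e: "twin_seq_nth c w j = twin_seq_nth c' w' j" if "j \<le> k" for j
  proof -
    have "twin_seq p ! j = twin_seq p' ! j" using eq by simp
    then show ?thesis using that len pc pc' by (simp add: twin_seq_def del: upt_Suc)
  qed
  have "twin c c (3 - w!1) = twin c' c' (3 - w'!1)"
    using e[of 0] w0 w(2) w'(2) by (simp add: twin_seq_nth_def)
  then have cc: "c = c'" "3 - w!1 = 3 - w'!1"
    using twin_inj[of c c "3 - w!1" c' c' "3 - w'!1"] w(2) w'(2) v by auto
  then have v1: "w!1 = w'!1" using v by auto
  have "w = w'"
  proof (rule nth_equalityI)
    show "length w = length w'" using len by simp
    fix j assume "j < length w"
    then have j: "j \<le> k" using len by simp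
    have "(w!j + c) mod 3 = (w'!j + c) mod 3"
      using e[OF j] twin_inj[of "(w!j + c) mod
        3" "(if even j then c else (c + w!1) mod 3)" "(if even j then 3 - w!1 else w!1)"
        "(w'!j + c) mod 3" "(if even j then c else (c + w!1) mod 3)"
          "(if even j then 3 - w!1 else w!1)"]
        cc v1 v w(2) by (auto simp: twin_seq_nth_def)
    then show "w!j = w'!j"
      using triangle_walk_nth_less[OF w(1) j] triangle_walk_nth_less[OF w'(1) j] w(2)
        unfolding less_3_iff
        by auto
  qed
  then show "p = p'" using pc pc' cc by simp
qed

lemma twin_chain:
  assumes adm: "\<forall>j<k. admissible (xs!j) (xs!Suc j)"
    and q: "q < 3" and s: "s = 1 \<or> s = 2" and xs0: "xs!0 = twin q q s" and "j \<le> k"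
  shows "twin_pos (xs!j) < 3 \<and>
    xs!j = twin (twin_pos (xs!j)) (if even j then q else (q + 3 - s) mod 3) (if even j then s else
      3 - s)"
  using \<open>j \<le> k\<close>
proof (induction j)
  case 0
  then show ?case using q s xs0 twin_pos_twin[of q q s] by simp
next
  case (Suc j)
  let ?a = "if even j then q else (q + 3 - s) mod 3" and ?s = "if even j then s else 3 - s"
  have IH: "twin_pos (xs!j) < 3" "xs!j = twin (twin_pos (xs!j)) ?a ?s" using Suc by auto
  have "admissible (twin (twin_pos (xs!j)) ?a ?s) (xs!Suc j)"
    using adm Suc.prems IH(2) by (metis Suc_le_lessD)
  from admissible_twinD[OF IH(1) _ _ this] q s
  have "twin_pos (xs!Suc j) < 3"
    "xs!Suc j = twin (twin_pos (xs!Suc j)) ((?a + 3 - ?s) mod 3) (3 - ?s)"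
    by (auto simp: less_3_iff)
  moreover have "(?a + 3 - ?s) mod 3 = (if even (Suc j) then q else (q + 3 - s) mod 3)"
    "3 - ?s = (if even (Suc j) then s else 3 - s)"
    using q s unfolding less_3_iff by auto
  ultimately show ?case by simp
qed

lemma twin_last_parity:
  assumes "q < 3" "s = 1 \<or> s = 2" "p < 3"
    and "twin ((q+2) mod 3) q s = twin p (if even k then q else (q + 3 - s) mod 3)
      (if even k then s else 3 - s)"
  shows "even k \<and> p = (q+2) mod 3"
proof (cases "even k")
  case True
  then show ?thesis using assms twin_inj[of "(q+2) mod 3" q s p q s] by auto
next
  case False
  then have "s = 3 - s"
    using assms twin_inj[of "(q+2) mod 3" q s p "(q + 3 - s) mod 3" "3 - s"] by auto
  then show ?thesis using assms(2) by auto
qed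

lemma twin_seqs_subset_image:
  assumes "xs \<in> twin_seqs k" "k \<ge> 1"
  shows "even k \<and> xs \<in> twin_seq ` ({..<3} \<times> walks 3 k 0 2)"
proof -
  have xs: "xs \<in> colour_seqs k" and nt: "\<not> (\<exists>x. xs!0 = rainbow x)"
    using assms by (auto simp: twin_seqs_def)
  have len: "length xs = Suc k" and adm: "\<forall>j<k. admissible (xs!j) (xs!Suc j)"
    using xs by (auto simp: colour_seqs_def)
  have "admissible (xs!0) (xs!1)" "normalised (xs!0) (xs!1)"
    using xs assms(2) by (auto simp: colour_seqs_def)
  then obtain q s where qs: "q < 3" "s = 1 \<or> s = 2" "xs!0 = twin q q s"
    and xs1: "xs!1 = twin ((q + 3 - s) mod 3) ((q + 3 - s) mod 3) (3 - s)"
    using normalised_admissible_cases nt by blast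
  define A where "A (j::nat) = (if even j then q else (q + 3 - s) mod 3)" for j
  define S where "S (j::nat) = (if even j then s else 3 - s)" for j
  have AS: "A j < 3" "S j = 1 \<or> S j = 2" for j using qs by (auto simp: A_def S_def)
  have inv: "twin_pos (xs!j) < 3 \<and> xs!j = twin (twin_pos (xs!j)) (A j) (S j)" if "j \<le> k" for j
    using twin_chain[OF adm qs that] unfolding A_def S_def .
  have adjq: "twin_pos (xs!Suc j) \<noteq> twin_pos (xs!j)" if "j < k" for j
  proof -
    have pos: "twin_pos (xs!j) < 3" using inv[of j] that by simp
    have "admissible (twin (twin_pos (xs!j)) (A j) (S j)) (xs!Suc j)"
      using inv[of j] adm that by simp
    from admissible_twinD[OF pos AS this] show ?thesis by simp
  qed
  have ek: "xs!k = twin ((q+2) mod 3) q s"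
    using xs qs rotate_twin[of q q s] by (simp add: colour_seqs_def)
  have "twin_pos (xs!k) < 3" "xs!k = twin (twin_pos (xs!k)) (A k) (S k)" using inv[of k] by auto
  then have evk: "even k" and qk: "twin_pos (xs!k) = (q+2) mod 3"
    using twin_last_parity[OF qs(1,2)] ek unfolding A_def S_def by auto
  define w where "w = map (\<lambda>X. (twin_pos X + 3 - q) mod 3) xs"
  have wj: "\<And>j. j \<le> k \<Longrightarrow> w!j = (twin_pos (xs!j) + 3 - q) mod 3"
    using len by (simp add: w_def)
  have "twin_pos (xs!1) = (q + 3 - s) mod 3" using xs1 qs twin_pos_twin by auto
  then have w1: "w!1 = 3 - s" using wj[of 1] assms(2) qs unfolding less_3_iff by auto
  have wm: "w \<in> walks 3 k 0 2"
    unfolding walks_def cycle_adj_3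
  proof (intro CollectI conjI allI impI)
    show "length w = k + 1" using len by (simp add: w_def)
    show "w!0 = 0" using wj[of 0] qs twin_pos_twin[of q q s] by simp
    show "w!k = 2" using wj[of k] qk qs(1) unfolding less_3_iff by auto
    fix i assume i: "i < k"
    have "twin_pos (xs!i) < 3" "twin_pos (xs!(i+1)) < 3" "twin_pos (xs!(i+1)) \<noteq> twin_pos (xs!i)"
      using inv[of i] inv[of "i+1"] adjq[OF i] i by auto
    then show "w!i < 3" "w!(i+1) < 3" "w!i \<noteq> w!(i+1)"
      using wj[of i] wj[of "i+1"] i qs(1) unfolding less_3_iff by auto
  qed
  have "twin_seq (q, w) = xs"
  proof (rule nth_equalityI)
    show "length (twin_seq (q, w)) = length xs" using len by (simp add: twin_seq_def w_def)
    fix j assume "j < length (twin_seq (q, w))"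
    then have j: "j \<le> k" using len by (simp add: twin_seq_def w_def)
    have z: "(w!j + q) mod 3 = twin_pos (xs!j)"
      using wj[OF j] inv[OF j] qs(1) unfolding less_3_iff by auto
    have "twin_seq (q,w) ! j = twin_seq_nth q w j"
      using j len by (simp add: twin_seq_def w_def del: upt_Suc)
    also have "\<dots> = twin (twin_pos (xs!j)) (A j) (S j)"
      using z w1 qs(2) by (auto simp: twin_seq_nth_def A_def S_def)
    also have "\<dots> = xs!j" using inv[OF j] by simp
    finally show "twin_seq (q, w) ! j = xs ! j" .
  qed
  then show ?thesis using evk wm qs(1) by blast
qed

lemma card_twin_seqs:
  assumes "k \<ge> 1"
  shows "card (twin_seqs k) = (if even k then 3 * t_walks k 1 else 0)"
proof (cases "even k")
  case True
  have "twin_seqs k = twin_seq ` ({..<3} \<times> walks 3 k 0 2)"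
    using twin_seqs_subset_image[OF _ assms] twin_seq_in_twin_seqs[OF _ assms True] by blast
  then have "card (twin_seqs k) = card ({..<3::nat} \<times> walks 3 k 0 2)"
    using card_image[OF inj_on_twin_seq[OF assms]] by simp
  also have "\<dots> = 3 * t_walks k 1"
    using card_triangle_walks_0_2[of k] by (simp add: card_cartesian_product)
  finally show ?thesis using True by simp
next
  case False
  then have "twin_seqs k = {}" using twin_seqs_subset_image[OF _ assms] by blast
  then show ?thesis using False by simp
qed

lemma finite_rainbow_seqs:
  assumes "k \<ge> 1"
  shows "finite (rainbow_seqs k)"
proof -
  have "rainbow_seqs k = rainbow_seq ` walks 3 k 0 1"
    using rainbow_seqs_subset_image[OF _ assms] rainbow_seq_in_rainbow_seqs[OF _ assms] by blast
  then show ?thesis using finite_walks[of 0 3 k 1] by simp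
qed

lemma finite_twin_seqs:
  assumes "k \<ge> 1"
  shows "finite (twin_seqs k)"
proof (cases "even k")
  case True
  have "twin_seqs k = twin_seq ` ({..<3} \<times> walks 3 k 0 2)"
    using twin_seqs_subset_image[OF _ assms] twin_seq_in_twin_seqs[OF _ assms True] by blast
  then show ?thesis using finite_walks[of 0 3 k 2] by simp
next
  case False
  then have "twin_seqs k = {}" using twin_seqs_subset_image[OF _ assms] by blast
  then show ?thesis by simp
qed

lemma card_colour_seqs:
  assumes "k \<ge> 1"
  shows "card (colour_seqs k) = t_walks k 1 + 3 * h_walks k 2"
proof -
  have "colour_seqs k = rainbow_seqs k \<union> twin_seqs k" "rainbow_seqs k \<inter> twin_seqs k = {}"
    by (auto simp: rainbow_seqs_def twin_seqs_def)
  then have "card (colour_seqs k) = card (rainbow_seqs k) + card (twin_seqs k)"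
    using card_Un_disjoint[OF finite_rainbow_seqs[OF assms] finite_twin_seqs[OF assms]] by simp
  then show ?thesis
    using card_rainbow_seqs[OF assms] card_twin_seqs[OF assms] h_walks_2_eq[of k] by simp
qed

section \<open>One-factorisations as normalised 3-edge-colourings\<close>

text \<open>Fixing the colours of the three edges \<open>a\<^sub>0, a\<^sub>1, a\<^sub>2\<close> at one vertex removes the
  freedom of labelling the three perfect matchings.\<close>

definition normal_colourings ::
  "'a set \<Rightarrow> 'a set set \<Rightarrow> 'a set \<Rightarrow> 'a set \<Rightarrow> 'a set \<Rightarrow> ('a set \<Rightarrow> nat) set" where
  "normal_colourings V E a0 a1 a2 = {c \<in> E \<rightarrow>\<^sub>E {..<3::nat}. (\<forall>x\<in>V. inj_on c {e\<in>E. x \<in> e})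
    \<and> c a0 = 0 \<and> c a1 = 1 \<and> c a2 = 2}"

definition colour_classes :: "'a set set \<Rightarrow> ('a set \<Rightarrow> nat) \<Rightarrow> 'a set set set" where
  "colour_classes E c = (\<lambda>r. {e\<in>E. c e = r}) ` {..<3}"

lemma perfect_matching_unique:
  assumes "perfect_matching V E M" "x \<in> V" "e \<in> M" "e' \<in> M" "x \<in> e" "x \<in> e'"
  shows "e = e'"
  using assms unfolding perfect_matching_def by blast

context
  fixes V :: "'a set" and E :: "'a set set" and x0 :: 'a and a0 a1 a2 :: "'a set"
  assumes x0: "x0 \<in> V" and inc0: "{e\<in>E. x0 \<in> e} = {a0,a1,a2}"
    and dist: "a0 \<noteq> a1" "a0 \<noteq> a2" "a1 \<noteq> a2"
    and deg: "\<forall>x\<in>V. card {e\<in>E. x\<in>e} = 3"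
begin

lemma edges_at_x0: "a0 \<in> E" "a1 \<in> E" "a2 \<in> E" "x0 \<in> a0" "x0 \<in> a1" "x0 \<in> a2"
  using inc0 by auto

lemma perfect_matching_colour_class:
  assumes c: "c \<in> normal_colourings V E a0 a1 a2" and r: "r < 3"
  shows "perfect_matching V E {e\<in>E. c e = r}"
  unfolding perfect_matching_def
proof (intro conjI ballI)
  show "{e \<in> E. c e = r} \<subseteq> E" by auto
  fix x assume x: "x \<in> V"
  let ?I = "{e\<in>E. x \<in> e}"
  have inj: "inj_on c ?I" and "c ` ?I \<subseteq> {..<3}"
    using c x by (auto simp: normal_colourings_def)
  moreover have "card (c ` ?I) = 3" using card_image[OF inj] deg x by simp
  ultimately have "c ` ?I = {..<3}" by (simp add: card_subset_eq)
  then have "r \<in> c ` ?I" using r by simp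
  then obtain e where e: "e \<in> ?I" "c e = r" by blast
  show "\<exists>!e. e \<in> {e \<in> E. c e = r} \<and> x \<in> e"
  proof (rule ex1I[of _ e])
    show "e \<in> {e \<in> E. c e = r} \<and> x \<in> e" using e by auto
    fix e' assume "e' \<in> {e \<in> E. c e = r} \<and> x \<in> e'"
    then have "c e' = c e" "e' \<in> ?I" using e by auto
    then show "e' = e" using inj_onD[OF inj] e(1) by blast
  qed
qed

lemma one_factorisation_colour_classes:
  assumes c: "c \<in> normal_colourings V E a0 a1 a2"
  shows "one_factorisation V E (colour_classes E c)"
  unfolding one_factorisation_def
proof (intro conjI ballI impI)
  fix M assume "M \<in> colour_classes E c"
  then obtain r where r: "r < 3" "M = {e\<in>E. c e = r}" by (auto simp: colour_classes_def)
  show "perfect_matching V E M" using perfect_matching_colour_class[OF c r(1)] r(2) by simp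
  have "c a0 = 0" "c a1 = 1" "c a2 = 2" using c by (auto simp: normal_colourings_def)
  then show "M \<noteq> {}" using r edges_at_x0 unfolding less_3_iff by auto
next
  show "\<Union> (colour_classes E c) = E"
    using c by (auto simp: colour_classes_def normal_colourings_def)
next
  fix M M' assume "M \<in> colour_classes E c" "M' \<in> colour_classes E c" "M \<noteq> M'"
  then show "M \<inter> M' = {}" by (auto simp: colour_classes_def)
qed

lemma inj_on_colour_classes: "inj_on (colour_classes E) (normal_colourings V E a0 a1 a2)"
proof (rule inj_onI)
  fix c c' assume c: "c \<in> normal_colourings V E a0 a1 a2" and c':
    "c' \<in> normal_colourings V E a0 a1 a2"
    and eq: "colour_classes E c = colour_classes E c'"
  have ca: "c a0 = 0" "c a1 = 1" "c a2 = 2" "c' a0 = 0" "c' a1 = 1" "c' a2 = 2"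
    and cE: "c \<in> E \<rightarrow>\<^sub>E {..<3}" "c' \<in> E \<rightarrow>\<^sub>E {..<3}"
    using c c' by (auto simp: normal_colourings_def)
  have same: "{e\<in>E. c e = r} = {e\<in>E. c' e = r}" if r: "r < 3" for r
  proof -
    have "{e\<in>E. c e = r} \<in> colour_classes E c'"
      using eq r by (auto simp: colour_classes_def)
    then obtain r' where r': "{e\<in>E. c e = r} = {e\<in>E. c' e = r'}"
      by (auto simp: colour_classes_def)
    obtain a where a: "a \<in> E" "c a = r" "c' a = r"
      using r edges_at_x0 ca unfolding less_3_iff by auto
    then have "a \<in> {e\<in>E. c' e = r'}" using r' by blast
    then have "r' = r" using a by simp
    then show ?thesis using r' by simp
  qed
  show "c = c'"
  proof (rule PiE_ext[OF cE])
    fix e assume e: "e \<in> E"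
    then have "c e < 3" using cE by auto
    then have classes: "{ea\<in>E. c ea = c e} = {ea\<in>E. c' ea = c e}" by (rule same)
    have "e \<in> {ea\<in>E. c ea = c e}" using e by simp
    then have "e \<in> {ea \<in> E. c' ea = c e}" unfolding classes .
    then show "c e = c' e" by simp
  qed
qed

lemma one_factorisationE:
  assumes "one_factorisation V E F"
  obtains M0 M1 M2 where "F = {M0, M1, M2}" "a0 \<in> M0" "a1 \<in> M1" "a2 \<in> M2"
    "M0 \<inter> M1 = {}" "M0 \<inter> M2 = {}" "M1 \<inter> M2 = {}"
proof -
  have pmF: "\<And>M. M \<in> F \<Longrightarrow> perfect_matching V E M"
    and unF: "\<Union>F = E" and disF: "\<And>M M'. M \<in> F \<Longrightarrow> M' \<in> F \<Longrightarrow> M \<noteq> M' \<Longrightarrow> M \<inter> M' = {}"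
    using assms by (auto simp: one_factorisation_def)
  obtain M0 M1 M2 where M: "M0 \<in> F" "a0 \<in> M0" "M1 \<in> F" "a1 \<in> M1" "M2 \<in> F" "a2 \<in> M2"
    using unF edges_at_x0 by blast
  have on_x0: "a = b" if "M \<in> F" "a \<in> M" "b \<in> M" "x0 \<in> a" "x0 \<in> b" for M a b
    using perfect_matching_unique[OF pmF x0] that by blast
  have "M0 \<noteq> M1" using on_x0[of M0 a0 a1] M edges_at_x0 dist by auto
  then have d01: "M0 \<inter> M1 = {}" using disF M by blast
  have "M0 \<noteq> M2" using on_x0[of M0 a0 a2] M edges_at_x0 dist by auto
  then have d02: "M0 \<inter> M2 = {}" using disF M by blast
  have "M1 \<noteq> M2" using on_x0[of M1 a1 a2] M edges_at_x0 dist by auto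
  then have d12: "M1 \<inter> M2 = {}" using disF M by blast
  have "M \<in> {M0, M1, M2}" if MF: "M \<in> F" for M
  proof -
    obtain e where e: "e \<in> M" "x0 \<in> e"
      using pmF[OF MF] x0 unfolding perfect_matching_def by blast
    moreover have "M \<subseteq> E" using pmF[OF MF] unfolding perfect_matching_def by simp
    ultimately have "e \<in> {e\<in>E. x0 \<in> e}" by blast
    then have "e = a0 \<or> e = a1 \<or> e = a2" unfolding inc0 by simp
    then have "M \<inter> M0 \<noteq> {} \<or> M \<inter> M1 \<noteq> {} \<or> M \<inter> M2 \<noteq> {}"
      using M e(1) by blast
    then show ?thesis using disF[OF MF] M by blast
  qed
  then have "F = {M0, M1, M2}" using M by blast
  then show thesis using that M d01 d02 d12 by blast
qed

lemma one_factorisation_in_colour_classes_image: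
  assumes F: "one_factorisation V E F"
  shows "F \<in> colour_classes E ` normal_colourings V E a0 a1 a2"
proof -
  obtain M0 M1 M2 where FM: "F = {M0, M1, M2}" and a: "a0 \<in> M0" "a1 \<in> M1" "a2 \<in> M2"
    and dj: "M0 \<inter> M1 = {}" "M0 \<inter> M2 = {}" "M1 \<inter> M2 = {}"
    using one_factorisationE[OF F] .
  have pmF: "\<And>M. M \<in> F \<Longrightarrow> perfect_matching V E M" and cov: "E = M0 \<union> M1 \<union> M2"
    using F FM unfolding one_factorisation_def by auto
  then have sub: "M0 \<subseteq> E" "M1 \<subseteq> E" "M2 \<subseteq> E" by auto
  define c where "c = (\<lambda>e\<in>E. if e \<in> M0 then 0 else if e \<in> M1 then 1 else (2::nat))"
  have c0: "e \<in> E \<Longrightarrow> c e = 0 \<longleftrightarrow> e \<in> M0"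
    and c1: "e \<in> E \<Longrightarrow> c e = 1 \<longleftrightarrow> e \<in> M1"
    and c2: "e \<in> E \<Longrightarrow> c e = 2 \<longleftrightarrow> e \<in> M2" for e
    using dj cov by (auto simp: c_def)
  have "colour_classes E c = F"
  proof -
    have "{e\<in>E. c e = 0} = M0" "{e\<in>E. c e = 1} = M1" "{e\<in>E. c e = 2} = M2"
      using sub c0 c1 c2 by auto
    moreover have "{..<3::nat} = {0,1,2}" by auto
    ultimately show ?thesis unfolding colour_classes_def FM by auto
  qed
  moreover have "c \<in> normal_colourings V E a0 a1 a2"
    unfolding normal_colourings_def
  proof (intro CollectI conjI ballI)
    show "c \<in> E \<rightarrow>\<^sub>E {..<3}" by (auto simp: c_def)
    show "c a0 = 0" "c a1 = 1" "c a2 = 2" using edges_at_x0 a c0 c1 c2 by auto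
    fix x assume x: "x \<in> V"
    show "inj_on c {e \<in> E. x \<in> e}"
    proof (rule inj_onI)
      fix e e' assume e: "e \<in> {e \<in> E. x \<in> e}" and e': "e' \<in> {e \<in> E. x \<in> e}" and ce: "c e = c e'"
      have ee: "e \<in> E" "e' \<in> E" using e e' by auto
      have "c e = 0 \<or> c e = 1 \<or> c e = 2" using ee by (simp add: c_def)
      then have "\<exists>M\<in>F. e \<in> M \<and> e' \<in> M"
        using c0[OF ee(1)] c0[OF ee(2)] c1[OF ee(1)] c1[OF ee(2)] c2[OF ee(1)] c2[OF ee(2)] ce FM
        by auto
      then show "e = e'" using perfect_matching_unique[OF pmF x] e e' by blast
    qed
  qed
  ultimately show ?thesis by blast
qed

lemma card_one_factorisations_eq_card_normal_colourings:
  "card {F. one_factorisation V E F} = card (normal_colourings V E a0 a1 a2)"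
proof -
  have "colour_classes E ` normal_colourings V E a0 a1 a2 = {F. one_factorisation V E F}"
  proof (intro subset_antisym subsetI)
    fix F assume "F \<in> colour_classes E ` normal_colourings V E a0 a1 a2"
    then show "F \<in> {F. one_factorisation V E F}" using one_factorisation_colour_classes by blast
  next
    fix F assume "F \<in> {F. one_factorisation V E F}"
    then show "F \<in> colour_classes E ` normal_colourings V E a0 a1 a2"
      using one_factorisation_in_colour_classes_image by simp
  qed
  then show ?thesis using card_image[OF inj_on_colour_classes] by simp
qed

end

section \<open>The generalised Petersen graph \<open>GP(3k,k)\<close>\<close>

definition outer :: "nat \<Rightarrow> nat \<Rightarrow> (bool \<times> nat) set" where
  "outer k m = {(False, m mod (3*k)), (False, (m+1) mod (3*k))}"
definition spoke :: "nat \<Rightarrow> nat \<Rightarrow> (bool \<times> nat) set" where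
  "spoke k m = {(False, m mod (3*k)), (True, m mod (3*k))}"
definition inner :: "nat \<Rightarrow> nat \<Rightarrow> (bool \<times> nat) set" where
  "inner k m = {(True, m mod (3*k)), (True, (m+k) mod (3*k))}"

lemma add_mod_eq_self_dvd:
  fixes i d n :: nat
  assumes "(i + d) mod n = i mod n"
  shows "n dvd d"
  using mod_eq_dvd_iff_nat[of i "i + d" n] assms by simp

lemma add_mod_neq_self:
  fixes i d n :: nat
  assumes "i < n" "0 < d" "d < n"
  shows "(i + d) mod n \<noteq> i"
  using add_mod_eq_self_dvd[of i d n] assms by (auto dest: nat_dvd_not_less)

lemma eq_add_mod_iff:
  fixes i m d n :: nat
  assumes "i < n" "m < n" "d \<le> n"
  shows "i = (m + d) mod n \<longleftrightarrow> m = (i + (n - d)) mod n"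
proof
  assume "i = (m + d) mod n"
  then have "(i + (n - d)) mod n = (m + d + (n - d)) mod n" by (simp add: mod_add_left_eq)
  then show "m = (i + (n - d)) mod n" using assms by simp
next
  assume "m = (i + (n - d)) mod n"
  then have "(m + d) mod n = (i + (n - d) + d) mod n" by (simp add: mod_add_left_eq)
  then show "i = (m + d) mod n" using assms by simp
qed

lemma doubleton_add_mod_eq:
  fixes i j d n :: nat
  assumes "i < n" "j < n" "{i, (i + d) mod n} = {j, (j + d) mod n}" "\<not> n dvd 2 * d"
  shows "i = j"
proof (rule ccontr)
  assume "i \<noteq> j"
  then have "i = (j + d) mod n" "j = (i + d) mod n"
    using assms(3) by (auto simp: doubleton_eq_iff)
  then have "(i + 2 * d) mod n = i mod n"
    using assms(1) by (simp add: mult_2 add.assoc [symmetric] mod_add_left_eq)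
  then show False using add_mod_eq_self_dvd assms(4) by blast
qed

lemma spoke_inj:
  "i < 3*k \<Longrightarrow> j < 3*k \<Longrightarrow> spoke k i = spoke k j \<Longrightarrow> i = j"
  by (auto simp: spoke_def doubleton_eq_iff)

lemma outer_neq_spoke: "outer k i \<noteq> spoke k j"
  by (auto simp: outer_def spoke_def doubleton_eq_iff)

lemma outer_neq_inner: "outer k i \<noteq> inner k j"
  by (auto simp: outer_def inner_def doubleton_eq_iff)

lemma spoke_neq_inner: "spoke k i \<noteq> inner k j"
  by (auto simp: spoke_def inner_def doubleton_eq_iff)

lemma gp_edges_eq:
  "gp_edges k = outer k ` {..<3*k} \<union> spoke k ` {..<3*k} \<union> inner k ` {..<3*k}"
  unfolding gp_edges_def outer_def spoke_def inner_def by auto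

lemma gp_edgesE:
  assumes "e \<in> gp_edges k"
  obtains m where "m < 3*k" "e = outer k m" | m where "m < 3*k" "e = spoke k m"
    | m where "m < 3*k" "e = inner k m"
  using assms unfolding gp_edges_eq by blast

section \<open>Colourings of \<open>GP(3k,k)\<close> as sequences of triples\<close>

text \<open>The \<open>j\<close>-th triple consists of the colours of \<open>u\<^sub>j\<^sub>-\<^sub>1 u\<^sub>j\<close>, \<open>u\<^sub>j\<^sub>+\<^sub>k\<^sub>-\<^sub>1 u\<^sub>j\<^sub>+\<^sub>k\<close>
  and \<open>u\<^sub>j\<^sub>+\<^sub>2\<^sub>k\<^sub>-\<^sub>1 u\<^sub>j\<^sub>+\<^sub>2\<^sub>k\<close>; indices are shifted by \<open>3k\<close> to avoid truncated
  subtraction.\<close>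

definition outer_triples :: "nat \<Rightarrow> ((bool \<times> nat) set \<Rightarrow> nat) \<Rightarrow> (nat \<times> nat \<times> nat) list" where
  "outer_triples k c = map (\<lambda>j. (c (outer k (j + 3*k - 1)), c (outer k (j + k + 3*k - 1)),
     c (outer k (j + 2*k + 3*k - 1)))) [0..<Suc k]"

lemma length_outer_triples: "length (outer_triples k c) = Suc k"
  by (simp add: outer_triples_def)

lemma coord_outer_triples:
  assumes "j \<le> k" "r < 3"
  shows "coord r (outer_triples k c ! j) = c (outer k (j + r*k + 3*k - 1))"
proof -
  have "outer_triples k c ! j = (c (outer k (j + 3*k - 1)), c (outer k (j + k + 3*k - 1)),
      c (outer k (j + 2*k + 3*k - 1)))"
    using assms(1) unfolding outer_triples_def by (simp del: upt_Suc)
  then show ?thesis using assms(2) unfolding less_3_iff coord_def by auto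
qed

context
  fixes k :: nat
  assumes k1: "1 \<le> k"
begin

lemma outer_mod: "outer k (i mod (3*k)) = outer k i"
  unfolding outer_def by (simp add: mod_Suc_eq)

lemma spoke_mod: "spoke k (i mod (3*k)) = spoke k i"
  unfolding spoke_def by simp

lemma inner_mod: "inner k (i mod (3*k)) = inner k i"
  unfolding inner_def by (simp add: mod_add_left_eq)

lemma outer_cong: "a mod (3*k) = b mod (3*k) \<Longrightarrow> outer k a = outer k b"
  by (metis outer_mod)

lemma inner_cong: "a mod (3*k) = b mod (3*k) \<Longrightarrow> inner k a = inner k b"
  by (metis inner_mod)

lemma mod_3k_less: "m mod (3*k) < 3*k"
  using k1 by simp

lemma outer_in_gp_edges: "outer k m \<in> gp_edges k"
  using mod_3k_less[of m] outer_mod[of m] unfolding gp_edges_eq by blast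

lemma spoke_in_gp_edges: "spoke k m \<in> gp_edges k"
  using mod_3k_less[of m] spoke_mod[of m] unfolding gp_edges_eq by blast

lemma inner_in_gp_edges: "inner k m \<in> gp_edges k"
  using mod_3k_less[of m] inner_mod[of m] unfolding gp_edges_eq by blast

lemma outer_inj:
  assumes "i < 3*k" "j < 3*k" "outer k i = outer k j"
  shows "i = j"
proof (rule doubleton_add_mod_eq[OF assms(1,2)])
  show "{i, (i + 1) mod (3*k)} = {j, (j + 1) mod (3*k)}"
    using assms unfolding outer_def by (simp add: doubleton_eq_iff)
  show "\<not> 3*k dvd 2 * 1" using k1 by (auto dest: dvd_imp_le)
qed

lemma inner_inj:
  assumes "i < 3*k" "j < 3*k" "inner k i = inner k j"
  shows "i = j"
proof (rule doubleton_add_mod_eq[OF assms(1,2)])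
  show "{i, (i + k) mod (3*k)} = {j, (j + k) mod (3*k)}"
    using assms unfolding inner_def by (simp add: doubleton_eq_iff)
  show "\<not> 3*k dvd 2 * k" using k1 by (auto dest: dvd_imp_le)
qed

lemma pred_mod_cong: "((a mod (3*k)) + 3*k - 1) mod (3*k) = (a + 3*k - 1) mod (3*k)"
proof -
  have "(a mod (3*k) + (3*k - 1)) mod (3*k) = (a + (3*k - 1)) mod (3*k)"
    by (simp add: mod_add_left_eq)
  then show ?thesis using k1 by (simp add: add.assoc)
qed

lemma incident_u:
  assumes "i < 3*k"
  shows "{e \<in> gp_edges k. (False, i) \<in> e} = {outer k i, outer k (i + 3*k - 1), spoke k i}"
proof -
  have "e \<in> {outer k i, outer k (i + 3*k - 1), spoke k i}" if "e \<in> gp_edges k"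
    "(False, i) \<in> e" for e
    using that(1)
  proof (cases rule: gp_edgesE)
    case (1 m)
    with that(2) have "i = m \<or> i = (m + 1) mod (3*k)" by (auto simp: outer_def)
    then have "m = i \<or> m = (i + (3*k - 1)) mod (3*k)"
      using eq_add_mod_iff[OF assms \<open>m < 3*k\<close>, of 1] k1 by auto
    then show ?thesis using 1 outer_mod[of "i + 3*k - 1"] k1 by (auto simp: add.assoc)
  qed (use that(2) in \<open>auto simp: spoke_def inner_def\<close>)
  moreover have "outer k (i + 3*k - 1) = {(False, (i + (3*k - 1)) mod (3*k)), (False, i)}"
    using assms k1 by (simp add: outer_def)
  then have "(False, i) \<in> outer k i" "(False, i) \<in> spoke k i" "(False, i) \<in> outer k (i + 3*k - 1)"
    using assms by (auto simp: outer_def spoke_def)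
  ultimately show ?thesis using outer_in_gp_edges spoke_in_gp_edges by blast
qed

lemma incident_v:
  assumes "i < 3*k"
  shows "{e \<in> gp_edges k. (True, i) \<in> e} = {spoke k i, inner k i, inner k (i + 2*k)}"
proof -
  have "e \<in> {spoke k i, inner k i, inner k (i + 2*k)}" if "e \<in> gp_edges k" "(True, i) \<in> e" for e
    using that(1)
  proof (cases rule: gp_edgesE)
    case (3 m)
    with that(2) have "i = m \<or> i = (m + k) mod (3*k)" by (auto simp: inner_def)
    then have "m = i \<or> m = (i + 2*k) mod (3*k)"
      using eq_add_mod_iff[OF assms \<open>m < 3*k\<close>, of k] by auto
    then show ?thesis using 3 inner_mod[of "i + 2*k"] by auto
  qed (use that(2) in \<open>auto simp: outer_def spoke_def\<close>)
  moreover have "(i + 2*k + k) mod (3*k) = i" using assms by simp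
  then have "(True, i) \<in> inner k i" "(True, i) \<in> spoke k i" "(True, i) \<in> inner k (i + 2*k)"
    using assms by (auto simp: inner_def spoke_def)
  ultimately show ?thesis using inner_in_gp_edges spoke_in_gp_edges by blast
qed

lemma outer_neq_outer_pred:
  "i < 3*k \<Longrightarrow> outer k i \<noteq> outer k (i + 3*k - 1)"
  using outer_inj[of i "(i + (3*k - 1)) mod (3*k)"] outer_mod[of "i + 3*k - 1"]
    add_mod_neq_self[of i "3*k" "3*k - 1"] k1 by (auto simp: add.assoc)

lemma inner_neq_inner_2k: "i < 3*k \<Longrightarrow> inner k i \<noteq> inner k (i + 2*k)"
  using inner_inj[of i "(i + 2*k) mod (3*k)"] inner_mod[of "i + 2*k"]
    add_mod_neq_self[of i "3*k" "2*k"] k1 by auto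

lemma gp_degree_3: "\<forall>x\<in>gp_vertices k. card {e\<in>gp_edges k. x\<in>e} = 3"
proof
  fix x assume "x \<in> gp_vertices k"
  then obtain b i where x: "x = (b, i)" "i < 3*k" by (auto simp: gp_vertices_def)
  show "card {e\<in>gp_edges k. x\<in>e} = 3"
  proof (cases b)
    case True
    then show ?thesis
      using x incident_v[OF x(2)] inner_neq_inner_2k[OF x(2)] spoke_neq_inner by simp
  next
    case False
    then show ?thesis
      using x incident_u[OF x(2)] outer_neq_outer_pred[OF x(2)] outer_neq_spoke by simp
  qed
qed

text \<open>The normalised edges are those at \<open>v\<^sub>0\<close>: \<open>u\<^sub>0 v\<^sub>0\<close>, \<open>v\<^sub>2\<^sub>k v\<^sub>0\<close> and \<open>v\<^sub>0 v\<^sub>k\<close>.\<close>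

abbreviation "gp_colourings \<equiv>
  normal_colourings (gp_vertices k) (gp_edges k) (spoke k 0) (inner k (2*k)) (inner k 0)"

lemma gp_colouring_less_3:
  "c \<in> gp_colourings \<Longrightarrow> X \<in> gp_edges k \<Longrightarrow> c X < 3"
  unfolding normal_colourings_def by auto

lemma colours_at_u_distinct:
  assumes "c \<in> gp_colourings"
  shows "c (outer k i) \<noteq> c (outer k (i + 3*k - 1)) \<and> c (outer k i) \<noteq> c (spoke k i)
    \<and> c (outer k (i + 3*k - 1)) \<noteq> c (spoke k i)"
proof -
  let ?i = "i mod (3*k)"
  have i: "?i < 3*k" using k1 by simp
  have "(False, ?i) \<in> gp_vertices k" using i by (simp add: gp_vertices_def)
  then have "inj_on c {e\<in>gp_edges k. (False, ?i) \<in> e}"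
    using assms by (simp add: normal_colourings_def)
  then have "inj_on c {outer k ?i, outer k (?i + 3*k - 1), spoke k ?i}"
    using incident_u[OF i] by simp
  moreover have "outer k ?i = outer k i" "spoke k ?i = spoke k i" using outer_mod spoke_mod by auto
  moreover have "outer k (?i + 3*k - 1) = outer k (i + 3*k - 1)"
    using outer_cong[of "?i + 3*k - 1" "i + 3*k - 1"] pred_mod_cong[of i] by simp
  moreover have "outer k ?i \<noteq> outer k (?i + 3*k - 1)" using outer_neq_outer_pred[OF i] .
  ultimately show ?thesis
    using inj_on_3D[of c "outer k i" "outer k (i + 3*k - 1)" "spoke k i"] outer_neq_spoke by metis
qed

lemma colours_at_v_distinct:
  assumes "c \<in> gp_colourings"
  shows "c (spoke k i) \<noteq> c (inner k i) \<and> c (spoke k i) \<noteq> c (inner k (i + 2*k))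
    \<and> c (inner k i) \<noteq> c (inner k (i + 2*k))"
proof -
  let ?i = "i mod (3*k)"
  have i: "?i < 3*k" using k1 by simp
  have "(True, ?i) \<in> gp_vertices k" using i by (simp add: gp_vertices_def)
  then have "inj_on c {e\<in>gp_edges k. (True, ?i) \<in> e}"
    using assms by (simp add: normal_colourings_def)
  then have "inj_on c {spoke k ?i, inner k ?i, inner k (?i + 2*k)}" using incident_v[OF i] by simp
  moreover have "inner k ?i = inner k i" "spoke k ?i = spoke k i" using inner_mod spoke_mod by auto
  moreover have "inner k (?i + 2*k) = inner k (i + 2*k)"
    using inner_cong[of "?i + 2*k" "i + 2*k"] by (simp add: mod_add_left_eq)
  moreover have "inner k ?i \<noteq> inner k (?i + 2*k)" using inner_neq_inner_2k[OF i] .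
  ultimately show ?thesis
    using inj_on_3D[of c "spoke k i" "inner k i" "inner k (i + 2*k)"] spoke_neq_inner by metis
qed

lemma inner_add_3k: "inner k (i + 3*k) = inner k i"
  by (rule inner_cong) simp
lemma inner_add_4k: "inner k (i + 4*k) = inner k (i + k)"
proof -
  have e: "i + 4*k = (i + k) + 3*k" by simp
  show ?thesis unfolding e by (rule inner_add_3k)
qed

lemma colours_inner_triangle_distinct:
  assumes "c \<in> gp_colourings"
  shows "c (inner k i) \<noteq> c (inner k (i+k)) \<and> c (inner k i) \<noteq> c (inner k (i+2*k))
    \<and> c (inner k (i+k)) \<noteq> c (inner k (i+2*k))"
proof -
  have a: "c (inner k i) \<noteq> c (inner k (i + 2*k))"
    using colours_at_v_distinct[OF assms, of i] by simp
  have b: "c (inner k (i+k)) \<noteq> c (inner k (i + k + 2*k))"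
    using colours_at_v_distinct[OF assms, of "i+k"] by simp
  have c: "c (inner k (i+2*k)) \<noteq> c (inner k (i + 2*k + 2*k))"
    using colours_at_v_distinct[OF assms, of "i+2*k"] by simp
  have e1: "i + k + 2*k = i + 3*k" and e2: "i + 2*k + 2*k = i + 4*k" by auto
  have b': "c (inner k (i+k)) \<noteq> c (inner k i)" using b unfolding e1 inner_add_3k .
  have c': "c (inner k (i+2*k)) \<noteq> c (inner k (i+k))" using c unfolding e2 inner_add_4k .
  show ?thesis using a b' c' by metis
qed

lemma colour_spoke_eq_inner:
  assumes "c \<in> gp_colourings"
  shows "c (spoke k i) = c (inner k (i+k))"
proof -
  have l: "c (inner k i) < 3" "c (inner k (i+k)) < 3" "c (inner k (i+2*k)) < 3" "c (spoke k i) < 3"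
    using gp_colouring_less_3[OF assms] inner_in_gp_edges spoke_in_gp_edges by auto
  show ?thesis
    using less_3_remaining[OF l(1-4)] colours_inner_triangle_distinct[OF assms, of i]
      colours_at_v_distinct[OF assms, of i]
      by blast
qed

lemma colour_spoke_eq_third:
  assumes "c \<in> gp_colourings"
  shows "c (spoke k i) = third (c (outer k (i + 3*k - 1))) (c (outer k i))"
proof -
  have l: "c (outer k (i + 3*k - 1)) < 3" "c (outer k i) < 3" "c (spoke k i) < 3"
    using gp_colouring_less_3[OF assms] outer_in_gp_edges spoke_in_gp_edges by auto
  show ?thesis using eq_third[OF l] colours_at_u_distinct[OF assms, of i] by metis
qed

lemma coord_outer_triples_Suc:
  assumes "j < k" "r < 3"
  shows "coord r (outer_triples k c ! Suc j) = c (outer k (j + r*k))"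
proof -
  have "coord r (outer_triples k c ! Suc j) = c (outer k (Suc j + r*k + 3*k - 1))"
    using coord_outer_triples assms by simp
  moreover have "Suc j + r*k + 3*k - 1 = (j + r*k) + 3*k" by simp
  moreover have "outer k ((j + r*k) + 3*k) = outer k (j + r*k)" by (rule outer_cong) simp
  ultimately show ?thesis by simp
qed

lemma outer_triples_admissible:
  assumes c: "c \<in> gp_colourings" and j: "j < k"
  shows "admissible (outer_triples k c ! j) (outer_triples k c ! Suc j)"
proof -
  have P: "coord r (outer_triples k c ! j) = c (outer k ((j + r*k) + 3*k - 1))" if "r < 3" for r
    using coord_outer_triples[of j k r c] j that by simp
  have Q: "coord r (outer_triples k c ! Suc j) = c (outer k (j + r*k))" if "r < 3" for r
    using coord_outer_triples_Suc j that by simp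
  have U: "c (outer k (i + 3*k - 1)) < 3 \<and> c (outer k i) < 3
    \<and> c (outer k (i + 3*k - 1)) \<noteq> c (outer k i) \<and>
      third (c (outer k (i + 3*k - 1))) (c (outer k i)) = c (spoke k i)" for i
    using colours_at_u_distinct[OF c, of i] gp_colouring_less_3[OF c] outer_in_gp_edges
      colour_spoke_eq_third[OF c, of i]
      by auto
  have S: "c (spoke k j) \<noteq> c (spoke k (j + k)) \<and> c (spoke k j) \<noteq> c (spoke k (j + 2*k))
    \<and> c (spoke k (j+k)) \<noteq> c (spoke k (j + 2*k))"
  proof -
    have e1: "j + k + k = j + 2*k" and e2: "j + 2*k + k = j + 3*k" by auto
    have s1: "c (spoke k j) = c (inner k (j+k))" using colour_spoke_eq_inner[OF c, of j] .
    have s2: "c (spoke k (j+k)) = c (inner k (j+2*k))"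
      using colour_spoke_eq_inner[OF c, of "j+k"] unfolding e1 .
    have s3: "c (spoke k (j+2*k)) = c (inner k j)"
      using colour_spoke_eq_inner[OF c, of "j+2*k"] unfolding e2 inner_add_3k .
    show ?thesis unfolding s1 s2 s3 using colours_inner_triangle_distinct[OF c, of j] by auto
  qed
  show ?thesis unfolding admissible_iff_coord
    using P[of 0] P[of 1] P[of 2] Q[of 0] Q[of 1] Q[of 2] U[of j] U[of "j+k"] U[of "j + 2*k"] S
    by simp
qed

lemma outer_triples_last:
  assumes c: "c \<in> gp_colourings"
  shows "outer_triples k c ! k = rotate (outer_triples k c ! 0)"
proof (rule triple_eqI)
  have a1: "k + 0*k + 3*k - 1 = 0 + 1*k + 3*k - 1" by simp
  have a2: "k + 1*k + 3*k - 1 = 0 + 2*k + 3*k - 1" by simp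
  have a3: "k + 2*k + 3*k - 1 = (0 + 0*k + 3*k - 1) + 3*k" using k1 by simp
  have o3: "outer k ((0 + 0*k + 3*k - 1) + 3*k) = outer k (0 + 0*k + 3*k - 1)"
    by (rule outer_cong) simp
  have g0: "coord 0 (outer_triples k c ! k) = c (outer k (k + 0*k + 3*k - 1))"
    by (rule coord_outer_triples) auto
  have g1: "coord 1 (outer_triples k c ! k) = c (outer k (k + 1*k + 3*k - 1))"
    by (rule coord_outer_triples) auto
  have g2: "coord 2 (outer_triples k c ! k) = c (outer k (k + 2*k + 3*k - 1))"
    by (rule coord_outer_triples) auto
  have h0: "coord 0 (outer_triples k c ! 0) = c (outer k (0 + 0*k + 3*k - 1))"
    by (rule coord_outer_triples) auto
  have h1: "coord 1 (outer_triples k c ! 0) = c (outer k (0 + 1*k + 3*k - 1))"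
    by (rule coord_outer_triples) auto
  have h2: "coord 2 (outer_triples k c ! 0) = c (outer k (0 + 2*k + 3*k - 1))"
    by (rule coord_outer_triples) auto
  show "coord 0 (outer_triples k c ! k) = coord 0 (rotate (outer_triples k c ! 0))"
    unfolding coord_rotate g0 h1 a1 ..
  show "coord 1 (outer_triples k c ! k) = coord 1 (rotate (outer_triples k c ! 0))"
    unfolding coord_rotate g1 h2 a2 ..
  show "coord 2 (outer_triples k c ! k) = coord 2 (rotate (outer_triples k c ! 0))"
    unfolding coord_rotate g2 h0 a3 o3 ..
qed

lemma outer_triples_normalised:
  assumes c: "c \<in> gp_colourings"
  shows "normalised (outer_triples k c ! 0) (outer_triples k c ! 1)"
proof -
  have U: "third (c (outer k (i + 3*k - 1))) (c (outer k i)) = c (spoke k i)" for i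
    using colour_spoke_eq_third[OF c, of i] by simp
  have n0: "c (spoke k 0) = 0" "c (inner k (2*k)) = 1" "c (inner k 0) = 2"
    using c by (auto simp: normal_colourings_def)
  have "c (spoke k k) = 1" using colour_spoke_eq_inner[OF c, of k] n0 by (simp add: mult_2)
  moreover have "c (spoke k (2*k)) = 2"
    using colour_spoke_eq_inner[OF c, of "2*k"] inner_add_3k[of 0] n0 by simp
  ultimately show ?thesis unfolding normalised_iff_coord
    using coord_outer_triples[of 0 k 0 c] coord_outer_triples[of 0 k 1 c]
      coord_outer_triples[of 0 k 2 c] coord_outer_triples_Suc[of 0 0 c]
        coord_outer_triples_Suc[of 0 1 c] coord_outer_triples_Suc[of 0 2 c]
      U[of 0] U[of k] U[of "2*k"] n0 k1 by simp
qed

lemma outer_triples_in_colour_seqs: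
  assumes c: "c \<in> gp_colourings"
  shows "outer_triples k c \<in> colour_seqs k"
  unfolding colour_seqs_def
    using length_outer_triples outer_triples_admissible[OF c] outer_triples_last[OF c]
      outer_triples_normalised[OF c]
      by auto

lemma coord_outer_triples_div_mod:
  assumes "m < 3*k"
  shows "coord (m div k) (outer_triples k c ! (m mod k + 1)) = c (outer k m)"
proof -
  have kp: "k > 0" using k1 by simp
  have j: "m mod k + 1 \<le> k" using kp by (simp add: Suc_leI)
  have r: "m div k < 3" using assms kp by (simp add: div_less_iff_less_mult mult.commute)
  have "coord (m div k) (outer_triples k c ! (m mod k + 1)) = c
    (outer k (m mod k + 1 + m div k * k + 3*k - 1))"
    by (rule coord_outer_triples[OF j r])
  moreover have "m mod k + 1 + m div k * k + 3*k - 1 = m + 3*k"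
    using div_mult_mod_eq[of m k] by simp
  moreover have "outer k (m + 3*k) = outer k m" by (rule outer_cong) simp
  ultimately show ?thesis by simp
qed

lemma gp_colourings_eqI:
  assumes c: "c \<in> gp_colourings" and c': "c' \<in> gp_colourings" and eq:
    "\<forall>m<3*k. c (outer k m) = c' (outer k m)"
  shows "c = c'"
proof -
  have outer: "c (outer k m) = c' (outer k m)" for m
  proof -
    have "m mod (3*k) < 3*k" using k1 by simp
    then show ?thesis using eq outer_mod[of m] by metis
  qed
  have spoke: "c (spoke k m) = c' (spoke k m)" for m
    using colour_spoke_eq_third[OF c, of m] colour_spoke_eq_third[OF c', of m] outer by simp
  have inner: "c (inner k m) = c' (inner k m)" for m
  proof -
    have e: "m + 2*k + k = m + 3*k" by simp
    have "c (spoke k (m + 2*k)) = c (inner k m)"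
      using colour_spoke_eq_inner[OF c, of "m + 2*k"] unfolding e inner_add_3k .
    moreover have "c' (spoke k (m + 2*k)) = c' (inner k m)"
      using colour_spoke_eq_inner[OF c', of "m + 2*k"] unfolding e inner_add_3k .
    ultimately show ?thesis using spoke by simp
  qed
  have cE: "c \<in> gp_edges k \<rightarrow>\<^sub>E {..<3}" "c' \<in> gp_edges k \<rightarrow>\<^sub>E {..<3}"
    using c c' by (auto simp: normal_colourings_def)
  show ?thesis
  proof (rule PiE_ext[OF cE])
    fix X assume "X \<in> gp_edges k"
    then show "c X = c' X" unfolding gp_edges_eq using outer spoke inner by blast
  qed
qed

lemma inj_on_outer_triples: "inj_on (outer_triples k) gp_colourings"
proof (rule inj_onI)
  fix c c' assume c: "c \<in> gp_colourings" and c': "c' \<in> gp_colourings" and eq: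
    "outer_triples k c = outer_triples k c'"
  show "c = c'"
  proof (rule gp_colourings_eqI[OF c c'], intro allI impI)
    fix m assume "m < 3*k"
    then show "c (outer k m) = c' (outer k m)"
      using coord_outer_triples_div_mod[of m c] coord_outer_triples_div_mod[of m c'] eq by simp
  qed
qed

end

text \<open>The inverse construction: the outer edge \<open>u\<^sub>m u\<^sub>m\<^sub>+\<^sub>1\<close> with \<open>m = j + r k\<close> takes
  entry \<open>r\<close> of triple \<open>j + 1\<close>, a spoke the colour missing at its outer end, and an inner
  edge the colour of the opposite spoke of its triangle.\<close>

definition outer_colour_of :: "nat \<Rightarrow> (nat \<times> nat \<times> nat) list \<Rightarrow> nat \<Rightarrow> nat" where
  "outer_colour_of k xs m = coord (m div k) (xs ! (m mod k + 1))"
definition spoke_colour_of :: "nat \<Rightarrow> (nat \<times> nat \<times> nat) list \<Rightarrow> nat \<Rightarrow> nat" where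
  "spoke_colour_of k xs i = third (outer_colour_of k xs ((i + 3*k - 1) mod (3*k)))
    (outer_colour_of k xs (i mod (3*k)))"
definition edge_colour_of :: "nat \<Rightarrow> (nat \<times> nat \<times> nat) list \<Rightarrow> (bool \<times> nat) set \<Rightarrow> nat" where
  "edge_colour_of k xs X =
     (if \<exists>m<3*k. X = outer k m then outer_colour_of k xs (THE m. m < 3*k \<and> X = outer k m)
      else if \<exists>m<3*k. X = spoke k m then spoke_colour_of k xs (THE m. m < 3*k \<and> X = spoke k m)
      else spoke_colour_of k xs ((THE m. m < 3*k \<and> X = inner k m) + 2*k))"
definition colouring_of :: "nat \<Rightarrow> (nat \<times> nat \<times> nat) list \<Rightarrow> (bool \<times> nat) set \<Rightarrow> nat" where
  "colouring_of k xs = restrict (edge_colour_of k xs) (gp_edges k)"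

context
  fixes k :: nat and xs :: "(nat \<times> nat \<times> nat) list"
  assumes k1: "1 \<le> k" and xs: "xs \<in> colour_seqs k"
begin

lemma edge_colour_of_outer:
  "m < 3*k \<Longrightarrow> edge_colour_of k xs (outer k m) = outer_colour_of k xs m"
proof -
  assume m: "m < 3*k"
  have "(THE m'. m' < 3*k \<and> outer k m = outer k m') = m"
    by (rule the_equality) (use m outer_inj[OF k1] in auto)
  then show ?thesis using m unfolding edge_colour_of_def by auto
qed

lemma edge_colour_of_spoke:
  "m < 3*k \<Longrightarrow> edge_colour_of k xs (spoke k m) = spoke_colour_of k xs m"
proof -
  assume m: "m < 3*k"
  have "(THE m'. m' < 3*k \<and> spoke k m = spoke k m') = m"
    by (rule the_equality) (use m spoke_inj in auto)
  moreover have "\<not> (\<exists>m'<3*k. spoke k m = outer k m')" using outer_neq_spoke by metis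
  ultimately show ?thesis using m unfolding edge_colour_of_def by auto
qed

lemma edge_colour_of_inner:
  "m < 3*k \<Longrightarrow> edge_colour_of k xs (inner k m) = spoke_colour_of k xs (m + 2*k)"
proof -
  assume m: "m < 3*k"
  have "(THE m'. m' < 3*k \<and> inner k m = inner k m') = m"
    by (rule the_equality) (use m inner_inj[OF k1] in auto)
  moreover have "\<not> (\<exists>m'<3*k. inner k m = outer k m')" using outer_neq_inner by metis
  moreover have "\<not> (\<exists>m'<3*k. inner k m = spoke k m')" using spoke_neq_inner by metis
  ultimately show ?thesis using m unfolding edge_colour_of_def by auto
qed

lemma colouring_of_outer:
  "colouring_of k xs (outer k m) = outer_colour_of k xs (m mod (3*k))"
proof -
  have "m mod (3*k) < 3*k" using k1 by simp
  then have "edge_colour_of k xs (outer k (m mod (3*k))) = outer_colour_of k xs (m mod (3*k))"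
    by (rule edge_colour_of_outer)
  then show ?thesis
    using outer_mod[OF k1, of m] outer_in_gp_edges[OF k1, of m] by (simp add: colouring_of_def)
qed

lemma spoke_colour_of_cong:
  "a mod (3*k) = b mod (3*k) \<Longrightarrow> spoke_colour_of k xs a = spoke_colour_of k xs b"
  unfolding spoke_colour_of_def using pred_mod_cong[OF k1, of a] pred_mod_cong[OF k1, of b] by metis

lemma colouring_of_spoke: "colouring_of k xs (spoke k m) = spoke_colour_of k xs m"
proof -
  have "m mod (3*k) < 3*k" using k1 by simp
  then have "edge_colour_of k xs (spoke k (m mod (3*k))) = spoke_colour_of k xs (m mod (3*k))"
    by (rule edge_colour_of_spoke)
  moreover have "spoke_colour_of k xs (m mod (3*k)) = spoke_colour_of k xs m"
    by (rule spoke_colour_of_cong) simp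
  ultimately show ?thesis
    using spoke_mod[OF k1, of m] spoke_in_gp_edges[OF k1, of m] by (simp add: colouring_of_def)
qed

lemma colouring_of_inner: "colouring_of k xs (inner k m) = spoke_colour_of k xs (m + 2*k)"
proof -
  have "m mod (3*k) < 3*k" using k1 by simp
  then have "edge_colour_of k xs (inner k (m mod (3*k))) = spoke_colour_of k xs (m mod (3*k) + 2*k)"
    by (rule edge_colour_of_inner)
  moreover have "spoke_colour_of k xs (m mod (3*k) + 2*k) = spoke_colour_of k xs (m + 2*k)"
    by (rule spoke_colour_of_cong) (simp add: mod_add_left_eq)
  ultimately show ?thesis
    using inner_mod[OF k1, of m] inner_in_gp_edges[OF k1, of m] by (simp add: colouring_of_def)
qed

lemma length_seq: "length xs = Suc k" using xs by (simp add: colour_seqs_def)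
lemma seq_admissible:
  "j < k \<Longrightarrow> admissible (xs!j) (xs!Suc j)" using xs by (simp add: colour_seqs_def)
lemma seq_last: "xs!k = rotate (xs!0)" using xs by (simp add: colour_seqs_def)
lemma seq_normalised: "normalised (xs!0) (xs!1)" using xs by (simp add: colour_seqs_def)

lemma outer_colour_of_add:
  assumes "j < k" "r < 3"
  shows "outer_colour_of k xs (j + r*k) = coord r (xs ! Suc j)"
proof -
  have kp: "k > 0" using k1 by simp
  have "(j + r*k) div k = r" "(j + r*k) mod k = j" using assms kp by auto
  then show ?thesis by (simp add: outer_colour_of_def)
qed

lemma outer_colour_of_pred:
  assumes "j \<le> k" "r < 3"
  shows "outer_colour_of k xs ((j + r*k + 3*k - 1) mod (3*k)) = coord r (xs ! j)"
proof (cases j)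
  case (Suc j')
  then have j': "j' < k" using assms by simp
  have "j + r*k + 3*k - 1 = (j' + r*k) + 3*k" using Suc by simp
  moreover have "j' + r*k < 3*k" using j' assms(2) by (auto simp: less_3_iff)
  ultimately have "(j + r*k + 3*k - 1) mod (3*k) = j' + r*k" by simp
  then show ?thesis using outer_colour_of_add[OF j' assms(2)] Suc by simp
next
  case 0
  have km: "k - 1 < k" using k1 by simp
  have "r = 0 \<or> r = 1 \<or> r = 2" using assms(2) by auto
  then show ?thesis
  proof (elim disjE)
    assume r: "r = 0"
    have "(j + r*k + 3*k - 1) mod (3*k) = (k - 1) + 2*k" using 0 r k1 by simp
    then show ?thesis
      using outer_colour_of_add[OF km, of 2] seq_last 0 r k1 by (simp add: coord_rotate)
  next
    assume r: "r = 1"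
    have "j + r*k + 3*k - 1 = (k - 1) + 3*k" using 0 r k1 by simp
    moreover have "((k - 1) + 3*k) mod (3*k) = k - 1"
    proof -
      have "((k - 1) + 3*k) mod (3*k) = (k - 1) mod (3*k)" by (rule mod_add_self2)
      also have "\<dots> = k - 1" using k1 by simp
      finally show ?thesis .
    qed
    ultimately have "(j + r*k + 3*k - 1) mod (3*k) = (k - 1) + 0*k" by simp
    then show ?thesis
      using outer_colour_of_add[OF km, of 0] seq_last 0 r k1 by (simp add: coord_rotate)
  next
    assume r: "r = 2"
    have "j + r*k + 3*k - 1 = ((k - 1) + 1*k) + 3*k" using 0 r k1 by simp
    moreover have "(((k - 1) + 1*k) + 3*k) mod (3*k) = (k - 1) + 1*k"
    proof -
      have "(((k - 1) + 1*k) + 3*k) mod (3*k) = ((k - 1) + 1*k) mod (3*k)" by (rule mod_add_self2)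
      also have "\<dots> = (k - 1) + 1*k" using k1 by simp
      finally show ?thesis .
    qed
    ultimately have "(j + r*k + 3*k - 1) mod (3*k) = (k - 1) + 1*k" by simp
    then show ?thesis
      using outer_colour_of_add[OF km, of 1] seq_last 0 r k1
        by (simp add: coord_rotate coord_Suc_0_rotate)
  qed
qed

lemma outer_colour_of_eq:
  assumes "i < 3*k"
  shows "outer_colour_of k xs i = coord (i div k) (xs ! Suc (i mod k))"
  by (simp add: outer_colour_of_def)

lemma div_mod_3k:
  assumes "i < 3*k"
  shows "i mod k + (i div k) * k = i" "i mod k < k" "i div k < 3"
proof -
  have kp: "k > 0" using k1 by simp
  show "i mod k + (i div k) * k = i" by (simp add: mod_div_mult_eq)
  show "i mod k < k" using kp by simp
  show "i div k < 3" using assms kp by (simp add: div_less_iff_less_mult mult.commute)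
qed

lemma outer_colour_of_pred_eq:
  assumes "i < 3*k"
  shows "outer_colour_of k xs ((i + 3*k - 1) mod (3*k)) = coord (i div k) (xs ! (i mod k))"
proof -
  have "outer_colour_of k xs ((i mod k + (i div k) * k + 3*k - 1) mod (3*k)) = coord (i div k)
    (xs ! (i mod k))"
    by (rule outer_colour_of_pred) (use div_mod_3k[OF assms] in auto)
  then show ?thesis using div_mod_3k(1)[OF assms] by simp
qed

lemma outer_colours_at_u:
  assumes "i < 3*k"
  shows "outer_colour_of k xs ((i + 3*k - 1) mod (3*k)) < 3 \<and> outer_colour_of k xs i < 3
    \<and> outer_colour_of k xs ((i + 3*k - 1) mod (3*k)) \<noteq> outer_colour_of k xs i"
  using admissible_coord[OF seq_admissible[OF div_mod_3k(2)[OF assms]] div_mod_3k(3)[OF assms]]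
    outer_colour_of_pred_eq[OF assms] outer_colour_of_eq[OF assms]
    by simp

lemma spoke_colour_of_add:
  assumes "j < k" "r < 3"
  shows "spoke_colour_of k xs (j + r*k) = third (coord r (xs!j)) (coord r (xs!Suc j))"
proof -
  have lt: "j + r*k < 3*k" using assms by (auto simp: less_3_iff)
  have "outer_colour_of k xs ((j + r*k + 3*k - 1) mod (3*k)) = coord r (xs!j)"
    by (rule outer_colour_of_pred) (use assms in auto)
  moreover have "outer_colour_of k xs ((j + r*k) mod (3*k)) = coord r (xs!Suc j)"
    using outer_colour_of_add[OF assms] lt by simp
  ultimately show ?thesis by (simp add: spoke_colour_of_def)
qed

lemma spoke_colour_of_less_3: "spoke_colour_of k xs i < 3"
proof -
  let ?i = "i mod (3*k)"
  have i: "?i < 3*k" using k1 by simp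
  have "spoke_colour_of k xs i = spoke_colour_of k xs ?i" by (rule spoke_colour_of_cong) simp
  also have "\<dots> = third (outer_colour_of k xs ((?i + 3*k - 1) mod (3*k))) (outer_colour_of k xs ?i)"
    using i by (simp add: spoke_colour_of_def)
  finally show ?thesis using outer_colours_at_u[OF i] third_less_neq by simp
qed

lemma spoke_colours_of_distinct:
  "spoke_colour_of k xs i \<noteq> spoke_colour_of k xs (i+k)
    \<and> spoke_colour_of k xs i \<noteq> spoke_colour_of k xs (i+2*k) \<and> spoke_colour_of k xs (i+k) \<noteq>
      spoke_colour_of k xs (i+2*k)"
proof -
  let ?i = "i mod (3*k)"
  have i: "?i < 3*k" using k1 by simp
  define j where "j = ?i mod k"
  define r where "r = ?i div k"
  have jr: "j + r*k = ?i" "j < k" "r < 3" using div_mod_3k[OF i] by (auto simp: j_def r_def)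
  have c0: "spoke_colour_of k xs i = spoke_colour_of k xs (j + r*k)"
    by (rule spoke_colour_of_cong) (simp add: jr(1))
  have c1: "spoke_colour_of k xs (i+k) = spoke_colour_of k xs (j + r*k + k)"
    by (rule spoke_colour_of_cong) (simp add: jr(1) mod_add_left_eq)
  have c2: "spoke_colour_of k xs (i+2*k) = spoke_colour_of k xs (j + r*k + 2*k)"
    by (rule spoke_colour_of_cong) (simp add: jr(1) mod_add_left_eq)
  have sv: "spoke_colour_of k xs (j + r'*k) = third (coord r' (xs!j)) (coord r' (xs!Suc j))" if
    "r' < 3" for r'
    using spoke_colour_of_add[OF jr(2) that] .
  have d: "third (coord 0 (xs!j)) (coord 0 (xs!Suc j)) \<noteq> third (coord 1 (xs!j))
    (coord 1 (xs!Suc j)) \<and>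
           third (coord 0 (xs!j)) (coord 0 (xs!Suc j)) \<noteq> third (coord 2 (xs!j)) (coord 2 (xs!Suc
             j)) \<and>
           third (coord 1 (xs!j)) (coord 1 (xs!Suc j)) \<noteq> third (coord 2 (xs!j)) (coord 2 (xs!Suc
             j))"
    using seq_admissible[OF jr(2)] unfolding admissible_iff_coord by simp
  have per1: "spoke_colour_of k xs (j + 3*k) = spoke_colour_of k xs j"
    by (rule spoke_colour_of_cong) simp
  have e4: "j + 4*k = (j + k) + 3*k" by simp
  have "(j + 4*k) mod (3*k) = (j + k) mod (3*k)" unfolding e4 by (rule mod_add_self2)
  then have per2: "spoke_colour_of k xs (j + 4*k) = spoke_colour_of k xs (j + k)"
    by (rule spoke_colour_of_cong)
  note per = per1 per2
  have s0: "spoke_colour_of k xs j = third (coord 0 (xs!j)) (coord 0 (xs!Suc j))"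
    using sv[of 0] by simp
  have s1: "spoke_colour_of k xs (j + k) = third (coord 1 (xs!j)) (coord 1 (xs!Suc j))"
    using sv[of 1] by simp
  have s2: "spoke_colour_of k xs (j + 2*k) = third (coord 2 (xs!j)) (coord 2 (xs!Suc j))"
    using sv[of 2] by simp
  have "r = 0 \<or> r = 1 \<or> r = 2" using jr(3) by auto
  then show ?thesis
  proof (elim disjE)
    assume r: "r = 0"
    have a: "j + r*k = j" "j + r*k + k = j + k" "j + r*k + 2*k = j + 2*k" using r by auto
    show ?thesis unfolding c0[unfolded a(1)] c1[unfolded a(2)] c2[unfolded a(3)] s0 s1 s2
      using d by auto
  next
    assume r: "r = 1"
    have a: "j + r*k = j + k" "j + r*k + k = j + 2*k" "j + r*k + 2*k = j + 3*k" using r by auto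
    show ?thesis unfolding c0[unfolded a(1)] c1[unfolded a(2)] c2[unfolded a(3)] per1 s0 s1 s2
      using d by auto
  next
    assume r: "r = 2"
    have a: "j + r*k = j + 2*k" "j + r*k + k = j + 3*k" "j + r*k + 2*k = j + 4*k" using r by auto
    show ?thesis unfolding c0[unfolded a(1)] c1[unfolded a(2)] c2[unfolded a(3)] per1 per2 s0 s1 s2
      using d by auto
  qed
qed

lemma colouring_of_less_3:
  assumes "X \<in> gp_edges k"
  shows "colouring_of k xs X < 3"
proof -
  from assms consider m where "m < 3*k" "X = outer k m" | m where "m < 3*k"
    "X = spoke k m" | m where "m < 3*k" "X = inner k m"
    unfolding gp_edges_eq by blast
  then show ?thesis
  proof cases
    case 1 then show ?thesis using colouring_of_outer outer_colours_at_u by simp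
  next
    case 2 then show ?thesis using colouring_of_spoke spoke_colour_of_less_3 by simp
  next
    case 3 then show ?thesis using colouring_of_inner spoke_colour_of_less_3 by simp
  qed
qed

lemma colouring_of_in_gp_colourings: "colouring_of k xs \<in> gp_colourings k"
  unfolding normal_colourings_def
proof (intro CollectI conjI ballI)
  show "colouring_of k xs \<in> gp_edges k \<rightarrow>\<^sub>E {..<3}"
    using colouring_of_less_3 by (auto simp: colouring_of_def)
next
  fix x assume "x \<in> gp_vertices k"
  then obtain b i where x: "x = (b, i)" "i < 3*k" by (auto simp: gp_vertices_def)
  show "inj_on (colouring_of k xs) {e \<in> gp_edges k. x \<in> e}"
  proof (cases b)
    case False
    have e1: "colouring_of k xs (outer k i) = outer_colour_of k xs i"
      using colouring_of_outer x(2) by simp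
    have e2: "colouring_of k xs (outer k (i + 3*k - 1)) = outer_colour_of k xs
      ((i + 3*k - 1) mod (3*k))"
      using colouring_of_outer by simp
    have e3: "colouring_of k xs (spoke k i) = third
      (outer_colour_of k xs ((i + 3*k - 1) mod (3*k))) (outer_colour_of k xs i)"
      using colouring_of_spoke x(2) by (simp add: spoke_colour_of_def)
    have "inj_on (colouring_of k xs) {outer k i, outer k (i + 3*k - 1), spoke k i}"
      by (rule inj_on_3I) (use e1 e2 e3 outer_colours_at_u[OF x(2)]
        third_less_neq[of "outer_colour_of k xs ((i + 3*k - 1) mod (3*k))" "outer_colour_of k xs
          i"] in auto)
    then show ?thesis using incident_u[OF k1 x(2)] x(1) False by simp
  next
    case True
    have e1: "colouring_of k xs (spoke k i) = spoke_colour_of k xs i"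
      using colouring_of_spoke by simp
    have e2: "colouring_of k xs (inner k i) = spoke_colour_of k xs (i + 2*k)"
      using colouring_of_inner by simp
    have "spoke_colour_of k xs (i + 2*k + 2*k) = spoke_colour_of k xs (i + k)"
    proof (rule spoke_colour_of_cong)
      have e4: "i + 2*k + 2*k = (i + k) + 3*k" by simp
      show "(i + 2*k + 2*k) mod (3*k) = (i + k) mod (3*k)" unfolding e4 by (rule mod_add_self2)
    qed
    then have e3: "colouring_of k xs (inner k (i + 2*k)) = spoke_colour_of k xs (i + k)"
      using colouring_of_inner[of "i + 2*k"] by simp
    have "inj_on (colouring_of k xs) {spoke k i, inner k i, inner k (i + 2*k)}"
      by (rule inj_on_3I) (use e1 e2 e3 spoke_colours_of_distinct[of i] in auto)
    then show ?thesis using incident_v[OF k1 x(2)] x(1) True by simp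
  qed
next
  have n: "third (coord 0 (xs!0)) (coord 0 (xs!1)) = 0"
    "third (coord 1 (xs!0)) (coord 1 (xs!1)) = 1" "third (coord 2 (xs!0)) (coord 2 (xs!1)) = 2"
    using seq_normalised unfolding normalised_iff_coord by auto
  have k0: "0 < k" using k1 by simp
  show "colouring_of k xs (spoke k 0) = 0"
    using colouring_of_spoke[of 0] spoke_colour_of_add[OF k0, of 0] n by simp
  have "spoke_colour_of k xs (2*k + 2*k) = spoke_colour_of k xs (0 + 1*k)"
  proof (rule spoke_colour_of_cong)
    have e4: "2*k + 2*k = (0 + 1*k) + 3*k" by simp
    show "(2*k + 2*k) mod (3*k) = (0 + 1*k) mod (3*k)" unfolding e4 by (rule mod_add_self2)
  qed
  then show "colouring_of k xs (inner k (2*k)) = 1"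
    using colouring_of_inner[of "2*k"] spoke_colour_of_add[OF k0, of 1] n by simp
  show "colouring_of k xs (inner k 0) = 2"
    using colouring_of_inner[of 0] spoke_colour_of_add[OF k0, of 2] n by simp
qed

lemma outer_triples_colouring_of: "outer_triples k (colouring_of k xs) = xs"
proof (rule nth_equalityI)
  show "length (outer_triples k (colouring_of k xs)) = length xs"
    using length_outer_triples length_seq by simp
  fix j assume "j < length (outer_triples k (colouring_of k xs))"
  then have j: "j \<le> k" using length_outer_triples by (simp add: less_Suc_eq_le)
  have "coord r (outer_triples k (colouring_of k xs) ! j) = coord r (xs ! j)" if r: "r < 3" for r
  proof -
    have "coord r (outer_triples k (colouring_of k xs) ! j) = colouring_of k xs
      (outer k (j + r*k + 3*k - 1))"
      using coord_outer_triples[OF j r] .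
    also have "\<dots> = outer_colour_of k xs ((j + r*k + 3*k - 1) mod (3*k))"
      using colouring_of_outer by simp
    also have "\<dots> = coord r (xs ! j)" using outer_colour_of_pred[OF j r] .
    finally show ?thesis .
  qed
  then show "outer_triples k (colouring_of k xs) ! j = xs ! j" using triple_eqI by simp
qed

end

lemma bij_betw_outer_triples:
  assumes k1: "1 \<le> k"
  shows "bij_betw (outer_triples k) (gp_colourings k) (colour_seqs k)"
proof (rule bij_betw_imageI)
  show "inj_on (outer_triples k) (gp_colourings k)" using inj_on_outer_triples[OF k1] .
  show "outer_triples k ` gp_colourings k = colour_seqs k"
  proof
    show "outer_triples k ` gp_colourings k \<subseteq> colour_seqs k"
      using outer_triples_in_colour_seqs[OF k1] by blast
    show "colour_seqs k \<subseteq> outer_triples k ` gp_colourings k"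
    proof
      fix xs assume xs: "xs \<in> colour_seqs k"
      have "outer_triples k (colouring_of k xs) = xs" using outer_triples_colouring_of[OF k1 xs] .
      moreover have "colouring_of k xs \<in> gp_colourings k"
        using colouring_of_in_gp_colourings[OF k1 xs] .
      ultimately show "xs \<in> outer_triples k ` gp_colourings k"
        by (intro image_eqI[of xs "outer_triples k" "colouring_of k xs"]) simp_all
    qed
  qed
qed

theorem lemma4:
  fixes k :: nat
  assumes "k \<ge> 1"
  shows "card {F. one_factorisation (gp_vertices k) (gp_edges k) F} = t_walks k 1 + 3 * h_walks k 2"
proof -
  have x0: "(True, 0) \<in> gp_vertices k" using assms by (simp add: gp_vertices_def)
  have inc0: "{e \<in> gp_edges k. (True, 0) \<in> e} = {spoke k 0, inner k (2*k), inner k 0}"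
    using incident_v[OF assms, of 0] assms by auto
  have d1: "spoke k 0 \<noteq> inner k (2*k)" "spoke k 0 \<noteq> inner k 0"
    using spoke_neq_inner by auto
  have d2: "inner k (2*k) \<noteq> inner k 0" using inner_neq_inner_2k[OF assms, of 0] assms by auto
  have "card {F. one_factorisation (gp_vertices k) (gp_edges k) F} = card (gp_colourings k)"
    by (rule card_one_factorisations_eq_card_normal_colourings[OF x0 inc0 d1 d2 gp_degree_3[OF assms]])
  also have "\<dots> = card (colour_seqs k)"
    using bij_betw_same_card[OF bij_betw_outer_triples[OF assms]] .
  also have "\<dots> = t_walks k 1 + 3 * h_walks k 2" using card_colour_seqs[OF assms] .
  finally show ?thesis .
qed

end
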